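(* Every finitely generated centrally nilpotent brace is supersoluble.
   Context: A brace (skew left brace) is a set $B$ with two binary operations $+$ and $\cdot$ such that $(B,+)$ and $(B,\cdot)$ are groups and $a(b+c)=ab-a+ac$ for all $a,b,c\in B$. A subbrace is a subset that is a subgroup of both groups; $B$ is finitely generated if it is the smallest subbrace containing some finite subset. $\lambda_a(b)=-a+ab$ defines a homomorphism $\lambda\colon(B,\cdot)\to\operatorname{Aut}(B,+)$. An ideal is a subbrace normal in both groups and invariant under all $\lambda_b$; quotients by ideals are braces. $\operatorname{Soc}(B)=\operatorname{Ker}\lambda\cap Z(B,+)$, $\zeta(B)=\operatorname{Soc}(B)\cap Z(B,\cdot)$; $\zeta_0(B)=\{0\}$, $\zeta_{k+1}(B)/\zeta_k(B)=\zeta(B/\zeta_k(B))$; $B$ is centrally nilpotent if $B=\zeta_m(B)$ for some $m$. $B$ is supersoluble if there is a finite chain of ideals $\{0\}=I_0\le\dots\le I_n=B$ such that for each $i$, either $(I_{i+1}/I_i,+)$ is infinite cyclic and $I_{i+1}/I_i\le\operatorname{Soc}(B/I_i)$, or $I_{i+1}/I_i$ has prime order. *)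

theory Defs
  imports "HOL-Algebra.Algebra"
begin

(* A (skew left) brace is represented by a HOL-Algebra ring record B:
   carrier B is the underlying set, ring.add B is the operation +, monoid.mult B is the
   operation \<cdot>.  (B,+) is the group add_monoid B, (B,\<cdot>) is the group B. *)

definition brace :: "('a, 'm) ring_scheme \<Rightarrow> bool" where
  "brace B \<longleftrightarrow> group (add_monoid B) \<and> group B \<and>
     (\<forall>a\<in>carrier B. \<forall>b\<in>carrier B. \<forall>c\<in>carrier B.
        monoid.mult B a (ring.add B b c) = ring.add B (ring.add B (monoid.mult B a b) (a_inv B a)) (monoid.mult B a c))"

definition blambda :: "('a, 'm) ring_scheme \<Rightarrow> 'a \<Rightarrow> 'a \<Rightarrow> 'a" where
  "blambda B a b = ring.add B (a_inv B a) (monoid.mult B a b)"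

definition subbrace :: "('a, 'm) ring_scheme \<Rightarrow> 'a set \<Rightarrow> bool" where
  "subbrace B H \<longleftrightarrow> subgroup H (add_monoid B) \<and> subgroup H B"

definition generated_subbrace :: "('a, 'm) ring_scheme \<Rightarrow> 'a set \<Rightarrow> 'a set" where
  "generated_subbrace B S = \<Inter>{H. subbrace B H \<and> S \<subseteq> H}"

definition finitely_generated_brace :: "('a, 'm) ring_scheme \<Rightarrow> bool" where
  "finitely_generated_brace B \<longleftrightarrow>
     (\<exists>S. finite S \<and> S \<subseteq> carrier B \<and> generated_subbrace B S = carrier B)"

definition brace_ideal :: "('a, 'm) ring_scheme \<Rightarrow> 'a set \<Rightarrow> bool" where
  "brace_ideal B I \<longleftrightarrow> subbrace B I \<and> normal I (add_monoid B) \<and> normal I B \<and>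
     (\<forall>b\<in>carrier B. \<forall>a\<in>I. blambda B b a \<in> I)"

(* quotient brace B/I: carrier = cosets a + I (= aI for an ideal I),
   operations induced by the setwise sum / product of cosets *)
definition brace_quot :: "('a, 'm) ring_scheme \<Rightarrow> 'a set \<Rightarrow> 'a set ring" where
  "brace_quot B I = \<lparr> carrier = a_rcosets\<^bsub>B\<^esub> I, monoid.mult = set_mult B, one = I,
                       ring.zero = I, ring.add = set_add B \<rparr>"

definition socle :: "('a, 'm) ring_scheme \<Rightarrow> 'a set" where
  "socle B = {a \<in> carrier B. (\<forall>b\<in>carrier B. blambda B a b = b) \<and>
                            (\<forall>b\<in>carrier B. ring.add B a b = ring.add B b a)}"

definition bcentre :: "('a, 'm) ring_scheme \<Rightarrow> 'a set" where
  "bcentre B = {a \<in> socle B. \<forall>b\<in>carrier B. monoid.mult B a b = monoid.mult B b a}"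

fun zeta_series :: "('a, 'm) ring_scheme \<Rightarrow> nat \<Rightarrow> 'a set" where
  "zeta_series B 0 = {ring.zero B}"
| "zeta_series B (Suc k) =
     {a \<in> carrier B. a_r_coset B (zeta_series B k) a \<in> bcentre (brace_quot B (zeta_series B k))}"

definition centrally_nilpotent :: "('a, 'm) ring_scheme \<Rightarrow> bool" where
  "centrally_nilpotent B \<longleftrightarrow> (\<exists>m. zeta_series B m = carrier B)"

definition sub_quot :: "('a, 'm) ring_scheme \<Rightarrow> 'a set \<Rightarrow> 'a set \<Rightarrow> 'a set set" where
  "sub_quot B J I = {a_r_coset B I a | a. a \<in> J}"

definition supersoluble :: "('a, 'm) ring_scheme \<Rightarrow> bool" where
  "supersoluble B \<longleftrightarrow>
     (\<exists>n. \<exists>I :: nat \<Rightarrow> 'a set.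
        I 0 = {ring.zero B} \<and> I n = carrier B \<and>
        (\<forall>i\<le>n. brace_ideal B (I i)) \<and>
        (\<forall>i<n. I i \<subseteq> I (Suc i)) \<and>
        (\<forall>i<n.
           (let Q = brace_quot B (I i); S = sub_quot B (I (Suc i)) (I i) in
             (infinite S \<and> (\<exists>g\<in>S. S = generate (add_monoid Q) {g}) \<and> S \<subseteq> socle Q)
             \<or> Factorial_Ring.prime (card S))))"

end

theory Submission
  imports Defs
begin

text \<open>
  Let \<open>\<Gamma>\<^sub>0 = B\<close> and let \<open>\<Gamma>\<^sub>n\<^sub>+\<^sub>1\<close> be the ideal generated by the commutators
  \<open>a \<star> b = -a + ab - b\<close>, \<open>b \<star> a\<close> and \<open>a + b - a - b\<close> with \<open>a \<in> \<Gamma>\<^sub>n\<close>, \<open>b \<in> B\<close>; it is the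
  smallest ideal modulo which \<open>\<Gamma>\<^sub>n\<close> is central, so \<open>\<Gamma>\<^sub>i \<subseteq> \<zeta>\<^sub>c\<^sub>-\<^sub>i(B)\<close> and central nilpotency
  gives \<open>\<Gamma>\<^sub>c = 0\<close>.
  Modulo \<open>\<Gamma>\<^sub>n\<^sub>+\<^sub>2\<close> the three commutator maps \<open>\<Gamma>\<^sub>n \<times> B \<rightarrow> \<Gamma>\<^sub>n\<^sub>+\<^sub>1\<close> are additive in the first
  argument and homomorphisms in the second (of \<open>(B,+)\<close> or \<open>(B,\<cdot>)\<close>). Hence if a finite set \<open>Y\<close>
  generates \<open>B\<close> modulo \<open>\<Gamma>\<^sub>n\<^sub>+\<^sub>1\<close> additively and multiplicatively, and a finite \<open>F\<close> generates
  \<open>\<Gamma>\<^sub>n\<close> additively modulo \<open>\<Gamma>\<^sub>n\<^sub>+\<^sub>1\<close>, then the commutators of \<open>F\<close> with \<open>Y\<close> generate \<open>\<Gamma>\<^sub>n\<^sub>+\<^sub>1\<close>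
  additively modulo \<open>\<Gamma>\<^sub>n\<^sub>+\<^sub>2\<close>; by induction every \<open>\<Gamma>\<^sub>n/\<Gamma>\<^sub>n\<^sub>+\<^sub>1\<close> is finitely generated.
  Adjoining these generators one at a time to \<open>\<Gamma>\<^sub>n\<^sub>+\<^sub>1\<close> produces ideals whose factors are cyclic
  and central in the quotient: an infinite one lies in the socle, and a finite one of order
  \<open>m = p r\<close> is split by the ideal generated by the \<open>p\<close>-th multiple of the generator, down to
  factors of prime order.
\<close>

locale skew_brace =
  fixes B (structure)
  assumes brace: "brace B"
begin

sublocale add: group "add_monoid B"
  rewrites "carrier (add_monoid B) = carrier B"
       and "monoid.mult (add_monoid B) = ring.add B"
       and "one (add_monoid B) = ring.zero B"
       and "m_inv (add_monoid B) = a_inv B"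
  using brace unfolding brace_def by (auto simp: a_inv_def)

sublocale mult: group B
  using brace unfolding brace_def by auto

lemmas add_group_simps = add.m_assoc add.inv_mult_group

lemma brace_distrib:
  "\<lbrakk>a \<in> carrier B; b \<in> carrier B; c \<in> carrier B\<rbrakk> \<Longrightarrow> a \<otimes> (b \<oplus> c) = a \<otimes> b \<oplus> \<ominus> a \<oplus> a \<otimes> c"
  using brace unfolding brace_def by auto

lemma add_neg_cancel_left [simp]: "\<lbrakk>x \<in> carrier B; y \<in> carrier B\<rbrakk> \<Longrightarrow> x \<oplus> (\<ominus> x \<oplus> y) = y"
  by (simp flip: add.m_assoc)

lemma neg_add_cancel_left [simp]: "\<lbrakk>x \<in> carrier B; y \<in> carrier B\<rbrakk> \<Longrightarrow> \<ominus> x \<oplus> (x \<oplus> y) = y"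
  by (simp flip: add.m_assoc)

lemma one_eq_zero [simp]: "\<one> = \<zero>"
proof -
  have "\<one> \<otimes> (\<zero> \<oplus> \<zero>) = \<one> \<otimes> \<zero> \<oplus> \<ominus> \<one> \<oplus> \<one> \<otimes> \<zero>"
    by (rule brace_distrib) auto
  then have "\<zero> = \<ominus> \<one>"
    by (simp add: add_group_simps)
  then show ?thesis
    by (metis add.inv_inv mult.one_closed add.inv_one)
qed

lemma mult_zero_right [simp]: "x \<in> carrier B \<Longrightarrow> x \<otimes> \<zero> = x"
  using mult.r_one by simp

lemma mult_inv_cancel_left [simp]: "\<lbrakk>x \<in> carrier B; y \<in> carrier B\<rbrakk> \<Longrightarrow> x \<otimes> (inv x \<otimes> y) = y"
  by (simp flip: mult.m_assoc)

abbreviation lam :: "'a \<Rightarrow> 'a \<Rightarrow> 'a"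
  where "lam \<equiv> blambda B"

lemma lam_eq: "lam a b = \<ominus> a \<oplus> a \<otimes> b"
  by (simp add: blambda_def)

lemma lam_closed [simp]: "\<lbrakk>a \<in> carrier B; b \<in> carrier B\<rbrakk> \<Longrightarrow> lam a b \<in> carrier B"
  by (simp add: lam_eq)

lemma mult_eq_add_lam: "\<lbrakk>a \<in> carrier B; b \<in> carrier B\<rbrakk> \<Longrightarrow> a \<otimes> b = a \<oplus> lam a b"
  by (simp add: lam_eq)

lemma lam_add:
  "\<lbrakk>a \<in> carrier B; b \<in> carrier B; c \<in> carrier B\<rbrakk> \<Longrightarrow> lam a (b \<oplus> c) = lam a b \<oplus> lam a c"
  by (simp add: lam_eq brace_distrib add_group_simps)

lemma lam_zero [simp]: "a \<in> carrier B \<Longrightarrow> lam a \<zero> = \<zero>"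
  using lam_add[of a \<zero> \<zero>] by (metis add.l_cancel_one add.one_closed add.r_one lam_closed)

lemma lam_neg: "\<lbrakk>a \<in> carrier B; b \<in> carrier B\<rbrakk> \<Longrightarrow> lam a (\<ominus> b) = \<ominus> lam a b"
  by (metis add.inv_equality add.inv_closed add.l_inv lam_add lam_closed lam_zero)

lemma lam_mult:
  assumes a: "a \<in> carrier B" and b: "b \<in> carrier B" and c: "c \<in> carrier B"
  shows "lam (a \<otimes> b) c = lam a (lam b c)"
proof -
  have "lam a (lam b c) = \<ominus> lam a b \<oplus> lam a (b \<otimes> c)"
    using a b c by (simp add: lam_eq[of b c] lam_add lam_neg)
  also have "\<dots> = lam (a \<otimes> b) c"
    using a b c by (simp add: lam_eq add_group_simps mult.m_assoc)
  finally show ?thesis ..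
qed

lemma lam_zero_left [simp]: "b \<in> carrier B \<Longrightarrow> lam \<zero> b = b"
  by (simp add: lam_eq)

lemma lam_lam_inv [simp]: "\<lbrakk>a \<in> carrier B; b \<in> carrier B\<rbrakk> \<Longrightarrow> lam a (lam (inv a) b) = b"
  by (simp flip: lam_mult)

lemma add_eq_mult_lam: "\<lbrakk>a \<in> carrier B; b \<in> carrier B\<rbrakk> \<Longrightarrow> a \<oplus> b = a \<otimes> lam (inv a) b"
  by (simp add: mult_eq_add_lam)

lemma neg_eq_lam_inv: "a \<in> carrier B \<Longrightarrow> \<ominus> a = lam a (inv a)"
  by (simp add: lam_eq)

section \<open>Ideals and congruence modulo an ideal\<close>

lemma add_subgroup_subset: "subgroup T (add_monoid B) \<Longrightarrow> T \<subseteq> carrier B"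
  using subgroup.subset by force

lemma add_subgroup_add_closed: "\<lbrakk>subgroup T (add_monoid B); x \<in> T; y \<in> T\<rbrakk> \<Longrightarrow> x \<oplus> y \<in> T"
  using subgroup.m_closed by force

lemma add_subgroup_neg_closed: "\<lbrakk>subgroup T (add_monoid B); x \<in> T\<rbrakk> \<Longrightarrow> \<ominus> x \<in> T"
  using subgroup.m_inv_closed[of T "add_monoid B" x] unfolding a_inv_def by simp

lemma add_subgroup_zero: "subgroup T (add_monoid B) \<Longrightarrow> \<zero> \<in> T"
  using subgroup.one_closed by force

lemma add_subgroupI:
  "\<lbrakk>T \<subseteq> carrier B; \<zero> \<in> T; \<And>x y. \<lbrakk>x \<in> T; y \<in> T\<rbrakk> \<Longrightarrow> x \<oplus> y \<in> T; \<And>x. x \<in> T \<Longrightarrow> \<ominus> x \<in> T\<rbrakk>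
   \<Longrightarrow> subgroup T (add_monoid B)"
  by (rule add.subgroupI) auto

lemma mult_subgroup_zero: "subgroup T B \<Longrightarrow> \<zero> \<in> T"
  using subgroup.one_closed by force

lemma brace_idealI:
  assumes "subgroup I (add_monoid B)" "subgroup I B"
    and "\<And>x h. \<lbrakk>x \<in> carrier B; h \<in> I\<rbrakk> \<Longrightarrow> x \<oplus> h \<oplus> \<ominus> x \<in> I"
    and "\<And>x h. \<lbrakk>x \<in> carrier B; h \<in> I\<rbrakk> \<Longrightarrow> x \<otimes> h \<otimes> inv x \<in> I"
    and "\<And>x h. \<lbrakk>x \<in> carrier B; h \<in> I\<rbrakk> \<Longrightarrow> lam x h \<in> I"
  shows "brace_ideal B I"
  unfolding brace_ideal_def subbrace_def
  using assms add.normal_inv_iff mult.normal_inv_iff by auto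

lemma brace_ideal_zero: "brace_ideal B {\<zero>}"
  by (rule brace_idealI) (auto intro: add_subgroupI simp: mult.triv_subgroup[simplified])

lemma brace_ideal_carrier: "brace_ideal B (carrier B)"
  by (rule brace_idealI) (auto simp: add.subgroup_self mult.subgroup_self)

context
  fixes I
  assumes I: "brace_ideal B I"
begin

lemma ideal_add_subgroup: "subgroup I (add_monoid B)"
  and ideal_mult_subgroup: "subgroup I B"
  using I unfolding brace_ideal_def subbrace_def by auto

lemma ideal_subset: "I \<subseteq> carrier B"
  using add_subgroup_subset[OF ideal_add_subgroup] .

lemma ideal_zero: "\<zero> \<in> I"
  using add_subgroup_zero[OF ideal_add_subgroup] .

lemma ideal_add_closed: "\<lbrakk>x \<in> I; y \<in> I\<rbrakk> \<Longrightarrow> x \<oplus> y \<in> I"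
  using add_subgroup_add_closed[OF ideal_add_subgroup] .

lemma ideal_neg_closed: "x \<in> I \<Longrightarrow> \<ominus> x \<in> I"
  using add_subgroup_neg_closed[OF ideal_add_subgroup] .

lemma ideal_add_conj_closed: "\<lbrakk>x \<in> carrier B; h \<in> I\<rbrakk> \<Longrightarrow> x \<oplus> h \<oplus> \<ominus> x \<in> I"
  using I add.normal_inv_iff unfolding brace_ideal_def by blast

lemma ideal_mult_conj_closed: "\<lbrakk>x \<in> carrier B; h \<in> I\<rbrakk> \<Longrightarrow> x \<otimes> h \<otimes> inv x \<in> I"
  using I mult.normal_inv_iff unfolding brace_ideal_def by blast

lemma ideal_lam_closed: "\<lbrakk>x \<in> carrier B; h \<in> I\<rbrakk> \<Longrightarrow> lam x h \<in> I"
  using I unfolding brace_ideal_def by blast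

end

definition cong_mod :: "'a set \<Rightarrow> 'a \<Rightarrow> 'a \<Rightarrow> bool"
  where "cong_mod I x y \<longleftrightarrow> x \<in> carrier B \<and> y \<in> carrier B \<and> x \<oplus> \<ominus> y \<in> I"

lemma cong_mod_carrier: "cong_mod I x y \<Longrightarrow> x \<in> carrier B" "cong_mod I x y \<Longrightarrow> y \<in> carrier B"
  by (auto simp: cong_mod_def)

lemma cong_modD: "cong_mod I x y \<Longrightarrow> \<exists>h\<in>I. x = h \<oplus> y"
  unfolding cong_mod_def by (intro bexI[of _ "x \<oplus> \<ominus> y"]) (auto simp: add_group_simps)

lemma cong_mod_mono: "\<lbrakk>I \<subseteq> J; cong_mod I x y\<rbrakk> \<Longrightarrow> cong_mod J x y"
  unfolding cong_mod_def by auto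

lemma add_subgroup_cong_closed:
  assumes "subgroup T (add_monoid B)" "I \<subseteq> T" "cong_mod I x y" "y \<in> T"
  shows "x \<in> T"
  using cong_modD[OF assms(3)] add_subgroup_add_closed[OF assms(1)] assms(2,4) by auto

context
  fixes I
  assumes I: "brace_ideal B I"
begin

lemma cong_mod_refl: "x \<in> carrier B \<Longrightarrow> cong_mod I x x"
  by (simp add: cong_mod_def ideal_zero[OF I])

lemma cong_mod_sym: "cong_mod I x y \<Longrightarrow> cong_mod I y x"
  unfolding cong_mod_def using ideal_neg_closed[OF I, of "x \<oplus> \<ominus> y"] by (auto simp: add_group_simps)

lemma cong_mod_trans: "\<lbrakk>cong_mod I x y; cong_mod I y z\<rbrakk> \<Longrightarrow> cong_mod I x z"
  unfolding cong_mod_def using ideal_add_closed[OF I, of "x \<oplus> \<ominus> y" "y \<oplus> \<ominus> z"]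
  by (auto simp: add_group_simps)

lemma cong_mod_zero_iff: "x \<in> carrier B \<Longrightarrow> cong_mod I x \<zero> \<longleftrightarrow> x \<in> I"
  by (simp add: cong_mod_def)

lemma cong_modI: "\<lbrakk>h \<in> I; y \<in> carrier B\<rbrakk> \<Longrightarrow> cong_mod I (h \<oplus> y) y"
  using ideal_subset[OF I] by (auto simp: cong_mod_def add_group_simps)

lemma cong_mod_add:
  assumes "cong_mod I x x'" and "cong_mod I y y'"
  shows "cong_mod I (x \<oplus> y) (x' \<oplus> y')"
proof -
  have c: "x \<in> carrier B" "x' \<in> carrier B" "y \<in> carrier B" "y' \<in> carrier B"
    using assms cong_mod_carrier by auto
  have "x \<oplus> (y \<oplus> \<ominus> y') \<oplus> \<ominus> x \<in> I"
    using ideal_add_conj_closed[OF I] assms(2) c unfolding cong_mod_def by blast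
  then have "(x \<oplus> (y \<oplus> \<ominus> y') \<oplus> \<ominus> x) \<oplus> (x \<oplus> \<ominus> x') \<in> I"
    using ideal_add_closed[OF I] assms(1) unfolding cong_mod_def by blast
  then show ?thesis
    using c unfolding cong_mod_def by (simp add: add_group_simps)
qed

lemma cong_mod_neg:
  assumes "cong_mod I x x'"
  shows "cong_mod I (\<ominus> x) (\<ominus> x')"
proof -
  have c: "x \<in> carrier B" "x' \<in> carrier B"
    using assms cong_mod_carrier by auto
  have "\<ominus> x \<oplus> \<ominus> (x \<oplus> \<ominus> x') \<oplus> \<ominus> (\<ominus> x) \<in> I"
    using ideal_add_conj_closed[OF I] ideal_neg_closed[OF I] assms c unfolding cong_mod_def by blast
  then show ?thesis
    using c unfolding cong_mod_def by (simp add: add_group_simps)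
qed

lemma cong_mod_lam_right:
  assumes c: "c \<in> carrier B" and "cong_mod I y y'"
  shows "cong_mod I (lam c y) (lam c y')"
proof -
  have "y \<in> carrier B" "y' \<in> carrier B"
    using assms cong_mod_carrier by auto
  moreover have "lam c (y \<oplus> \<ominus> y') \<in> I"
    using ideal_lam_closed[OF I c] assms unfolding cong_mod_def by blast
  ultimately show ?thesis
    using c unfolding cong_mod_def by (simp add: lam_add lam_neg)
qed

text \<open>Write \<open>k y = y k'\<close> with \<open>k' = y\<^sup>-\<^sup>1 k y \<in> I\<close> and expand both products with \<open>\<lambda>\<close>.\<close>

lemma lam_ideal_cong:
  assumes k: "k \<in> I" and y: "y \<in> carrier B"
  shows "cong_mod I (lam k y) y"
proof -
  have kc: "k \<in> carrier B"
    using k ideal_subset[OF I] by auto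
  define k' where "k' = inv y \<otimes> k \<otimes> inv (inv y)"
  have k': "k' \<in> I"
    unfolding k'_def using ideal_mult_conj_closed[OF I, of "inv y" k] k y by auto
  then have k'c: "k' \<in> carrier B"
    using ideal_subset[OF I] by auto
  have "k \<otimes> y = y \<otimes> k'"
    using kc y unfolding k'_def by (simp add: mult.m_assoc)
  then have "lam k y = \<ominus> k \<oplus> (y \<oplus> lam y k')"
    using kc y k'c by (metis mult_eq_add_lam neg_add_cancel_left lam_closed)
  then have "lam k y \<oplus> \<ominus> y = \<ominus> k \<oplus> (y \<oplus> lam y k' \<oplus> \<ominus> y)"
    using kc y k'c by (simp add: add_group_simps)
  moreover have "\<ominus> k \<oplus> (y \<oplus> lam y k' \<oplus> \<ominus> y) \<in> I"
    using ideal_add_closed[OF I ideal_neg_closed[OF I k]]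
      ideal_add_conj_closed[OF I y ideal_lam_closed[OF I y k']] by blast
  ultimately show ?thesis
    using kc y unfolding cong_mod_def by simp
qed

lemma cong_mod_lam_left:
  assumes y: "y \<in> carrier B" and xx': "cong_mod I x x'"
  shows "cong_mod I (lam x y) (lam x' y)"
proof -
  have x': "x' \<in> carrier B"
    using xx' cong_mod_carrier by auto
  obtain h where h: "h \<in> I" "x = h \<oplus> x'"
    using cong_modD[OF xx'] by blast
  have hc: "h \<in> carrier B"
    using h ideal_subset[OF I] by auto
  define k where "k = lam (inv x') (\<ominus> x' \<oplus> h \<oplus> x')"
  have k: "k \<in> I"
    using ideal_add_conj_closed[OF I, of "\<ominus> x'" h] h x' unfolding k_def
    by (intro ideal_lam_closed[OF I]) auto
  have "x' \<otimes> k = x"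
    using h x' hc by (simp add: k_def mult_eq_add_lam add_group_simps)
  then have "lam x y = lam x' (lam k y)"
    using k x' y ideal_subset[OF I] by (auto simp: lam_mult)
  then show ?thesis
    using cong_mod_lam_right[OF x' lam_ideal_cong[OF k y]] by simp
qed

lemma cong_mod_mult:
  assumes xx': "cong_mod I x x'" and yy': "cong_mod I y y'"
  shows "cong_mod I (x \<otimes> y) (x' \<otimes> y')"
proof -
  have c: "x \<in> carrier B" "x' \<in> carrier B" "y \<in> carrier B" "y' \<in> carrier B"
    using xx' yy' cong_mod_carrier by auto
  have "cong_mod I (lam x y) (lam x' y')"
    using cong_mod_trans cong_mod_lam_left[OF c(3) xx'] cong_mod_lam_right[OF c(2) yy'] by blast
  then have "cong_mod I (x \<oplus> lam x y) (x' \<oplus> lam x' y')"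
    using cong_mod_add[OF xx'] by blast
  then show ?thesis
    using c by (simp add: mult_eq_add_lam)
qed

lemma mult_subgroup_cong_closed:
  assumes T: "subgroup T B" and IT: "I \<subseteq> T" and xy: "cong_mod I x y" and y: "y \<in> T"
  shows "x \<in> T"
proof -
  have c: "x \<in> carrier B" "y \<in> carrier B"
    using xy cong_mod_carrier by auto
  have "cong_mod I (inv y \<otimes> x) (inv y \<otimes> y)"
    by (rule cong_mod_mult[OF cong_mod_refl xy]) (simp add: c)
  then have "inv y \<otimes> x \<in> I"
    using c cong_mod_zero_iff by simp
  then have "y \<otimes> (inv y \<otimes> x) \<in> T"
    using IT y subgroup.m_closed[OF T] by blast
  then show ?thesis
    using c by simp
qed

end

section \<open>Centrality modulo an ideal\<close>

definition central_mod :: "'a set \<Rightarrow> 'a \<Rightarrow> bool"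
  where "central_mod I a \<longleftrightarrow> a \<in> carrier B \<and>
    (\<forall>b\<in>carrier B. cong_mod I (lam a b) b \<and> cong_mod I (a \<oplus> b) (b \<oplus> a) \<and> cong_mod I (lam b a) a)"

lemma central_mod_carrier: "central_mod I a \<Longrightarrow> a \<in> carrier B"
  by (simp add: central_mod_def)

lemma central_modD:
  assumes "central_mod I a" "b \<in> carrier B"
  shows central_mod_lam_left: "cong_mod I (lam a b) b"
    and central_mod_add_comm: "cong_mod I (a \<oplus> b) (b \<oplus> a)"
    and central_mod_lam_right: "cong_mod I (lam b a) a"
  using assms unfolding central_mod_def by auto

lemma central_mod_mono: "\<lbrakk>I \<subseteq> J; central_mod I a\<rbrakk> \<Longrightarrow> central_mod J a"
  unfolding central_mod_def using cong_mod_mono by blast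

context
  fixes I
  assumes I: "brace_ideal B I"
begin

lemma central_mod_ideal_elem:
  assumes a: "a \<in> I"
  shows "central_mod I a"
proof -
  have ac: "a \<in> carrier B"
    using a ideal_subset[OF I] by auto
  show ?thesis unfolding central_mod_def
  proof (intro conjI ballI ac)
    fix b assume b: "b \<in> carrier B"
    show "cong_mod I (lam a b) b"
      by (rule lam_ideal_cong[OF I a b])
    have "a \<oplus> (b \<oplus> \<ominus> a \<oplus> \<ominus> b) \<in> I"
      using ideal_add_closed[OF I a] ideal_add_conj_closed[OF I b ideal_neg_closed[OF I a]] by blast
    then show "cong_mod I (a \<oplus> b) (b \<oplus> a)"
      using ac b unfolding cong_mod_def by (simp add: add_group_simps)
    have "lam b a \<oplus> \<ominus> a \<in> I"
      using ideal_add_closed[OF I ideal_lam_closed[OF I b a] ideal_neg_closed[OF I a]] .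
    then show "cong_mod I (lam b a) a"
      using ac b unfolding cong_mod_def by simp
  qed
qed

lemma central_mod_mult_comm:
  assumes a: "central_mod I a" and b: "b \<in> carrier B"
  shows "cong_mod I (a \<otimes> b) (b \<otimes> a)"
proof -
  note [trans] = cong_mod_trans[OF I]
  have ac: "a \<in> carrier B"
    using central_mod_carrier[OF a] .
  have "cong_mod I (a \<oplus> lam a b) (a \<oplus> b)"
    using cong_mod_add[OF I cong_mod_refl[OF I ac] central_mod_lam_left[OF a b]] .
  also have "cong_mod I (a \<oplus> b) (b \<oplus> a)"
    using central_mod_add_comm[OF a b] .
  also have "cong_mod I (b \<oplus> a) (b \<oplus> lam b a)"
    using cong_mod_add[OF I cong_mod_refl[OF I b] cong_mod_sym[OF I central_mod_lam_right[OF a b]]] .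
  finally show ?thesis
    using ac b by (simp add: mult_eq_add_lam)
qed

text \<open>The third condition in \<open>central_mod\<close> is redundant once multiplicative centrality is known:
  \<open>b + \<lambda>\<^sub>b(a) = ba \<equiv> ab = a + \<lambda>\<^sub>a(b) \<equiv> a + b \<equiv> b + a\<close>.\<close>

lemma central_mod_iff:
  "central_mod I a \<longleftrightarrow> a \<in> carrier B \<and>
    (\<forall>b\<in>carrier B. cong_mod I (lam a b) b \<and> cong_mod I (a \<oplus> b) (b \<oplus> a) \<and> cong_mod I (a \<otimes> b) (b \<otimes> a))"
  (is "_ \<longleftrightarrow> ?rhs")
proof
  assume "central_mod I a"
  then show ?rhs
    by (simp add: central_mod_carrier central_modD central_mod_mult_comm)
next
  assume h: ?rhs
  then have a: "a \<in> carrier B" by blast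
  show "central_mod I a" unfolding central_mod_def
  proof (intro conjI ballI a)
    fix b assume b: "b \<in> carrier B"
    note [trans] = cong_mod_trans[OF I]
    show "cong_mod I (lam a b) b" "cong_mod I (a \<oplus> b) (b \<oplus> a)"
      using h b by simp_all
    have "b \<oplus> lam b a = b \<otimes> a"
      using a b by (simp add: mult_eq_add_lam)
    also have "cong_mod I (b \<otimes> a) (a \<otimes> b)"
      using h b by (simp add: cong_mod_sym[OF I])
    also have "a \<otimes> b = a \<oplus> lam a b"
      using a b by (simp add: mult_eq_add_lam)
    also have "cong_mod I (a \<oplus> lam a b) (a \<oplus> b)"
      using cong_mod_add[OF I cong_mod_refl[OF I a]] h b by simp
    also have "cong_mod I (a \<oplus> b) (b \<oplus> a)"
      using h b by simp
    finally have "cong_mod I (\<ominus> b \<oplus> (b \<oplus> lam b a)) (\<ominus> b \<oplus> (b \<oplus> a))"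
      by (rule cong_mod_add[OF I cong_mod_refl[OF I add.inv_closed[OF b]]])
    then show "cong_mod I (lam b a) a"
      using a b by simp
  qed
qed

lemma central_mod_zero: "central_mod I \<zero>"
  unfolding central_mod_def using cong_mod_refl[OF I] by auto

lemma central_mod_add:
  assumes a: "central_mod I a" and a': "central_mod I a'"
  shows "central_mod I (a \<oplus> a')"
proof -
  have ac: "a \<in> carrier B" "a' \<in> carrier B"
    using a a' central_mod_carrier by auto
  note [trans] = cong_mod_trans[OF I]
  show ?thesis unfolding central_mod_def
  proof (intro conjI ballI)
    show "a \<oplus> a' \<in> carrier B"
      using ac by simp
    fix b assume b: "b \<in> carrier B"
    define a'' where "a'' = lam (inv a) a'"
    have a''c: "a'' \<in> carrier B"
      using ac by (simp add: a''_def)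
    have "lam (a \<oplus> a') b = lam a (lam a'' b)"
      using ac a''c b by (simp add: add_eq_mult_lam a''_def lam_mult)
    also have "cong_mod I \<dots> (lam a (lam a' b))"
      using ac b central_mod_lam_right[OF a', of "inv a"] unfolding a''_def
      by (intro cong_mod_lam_right[OF I] cong_mod_lam_left[OF I]) auto
    also have "cong_mod I \<dots> (lam a b)"
      using cong_mod_lam_right[OF I ac(1) central_mod_lam_left[OF a' b]] .
    also have "cong_mod I \<dots> b"
      using central_mod_lam_left[OF a b] .
    finally show "cong_mod I (lam (a \<oplus> a') b) b" .
    have "a \<oplus> a' \<oplus> b = a \<oplus> (a' \<oplus> b)"
      using ac b by (simp add: add_group_simps)
    also have "cong_mod I \<dots> (a \<oplus> (b \<oplus> a'))"
      using cong_mod_add[OF I cong_mod_refl[OF I ac(1)] central_mod_add_comm[OF a' b]] .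
    also have "a \<oplus> (b \<oplus> a') = (a \<oplus> b) \<oplus> a'"
      using ac b by (simp add: add_group_simps)
    also have "cong_mod I \<dots> ((b \<oplus> a) \<oplus> a')"
      using cong_mod_add[OF I central_mod_add_comm[OF a b] cong_mod_refl[OF I ac(2)]] .
    finally show "cong_mod I (a \<oplus> a' \<oplus> b) (b \<oplus> (a \<oplus> a'))"
      using ac b by (simp add: add_group_simps)
    have "cong_mod I (lam b a \<oplus> lam b a') (a \<oplus> a')"
      using cong_mod_add[OF I central_mod_lam_right[OF a b] central_mod_lam_right[OF a' b]] .
    then show "cong_mod I (lam b (a \<oplus> a')) (a \<oplus> a')"
      using ac b by (simp add: lam_add)
  qed
qed

lemma central_mod_neg:
  assumes a: "central_mod I a"
  shows "central_mod I (\<ominus> a)"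
proof -
  have ac: "a \<in> carrier B"
    using central_mod_carrier[OF a] .
  note [trans] = cong_mod_trans[OF I]
  show ?thesis unfolding central_mod_def
  proof (intro conjI ballI)
    show "\<ominus> a \<in> carrier B"
      using ac by simp
    fix b assume b: "b \<in> carrier B"
    have "cong_mod I (\<ominus> a) (inv a)"
      using central_mod_lam_left[OF a] ac by (simp add: neg_eq_lam_inv)
    then have "cong_mod I (lam (\<ominus> a) b) (lam (inv a) b)"
      using cong_mod_lam_left[OF I b] by blast
    also have "cong_mod I \<dots> b"
      using cong_mod_sym[OF I central_mod_lam_left[OF a, of "lam (inv a) b"]] ac b by simp
    finally show "cong_mod I (lam (\<ominus> a) b) b" .
    have "cong_mod I (\<ominus> a \<oplus> (b \<oplus> a) \<oplus> \<ominus> a) (\<ominus> a \<oplus> (a \<oplus> b) \<oplus> \<ominus> a)"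
      using cong_mod_add[OF I cong_mod_add[OF I cong_mod_refl[OF I add.inv_closed[OF ac]]
          cong_mod_sym[OF I central_mod_add_comm[OF a b]]] cong_mod_refl[OF I add.inv_closed[OF ac]]] .
    then show "cong_mod I (\<ominus> a \<oplus> b) (b \<oplus> \<ominus> a)"
      using ac b by (simp add: add_group_simps)
    have "cong_mod I (\<ominus> lam b a) (\<ominus> a)"
      using cong_mod_neg[OF I central_mod_lam_right[OF a b]] .
    then show "cong_mod I (lam b (\<ominus> a)) (\<ominus> a)"
      using ac b by (simp add: lam_neg)
  qed
qed

lemma central_add_subgroup_is_mult_subgroup:
  assumes T: "subgroup T (add_monoid B)" and IT: "I \<subseteq> T"
    and central: "\<And>t. t \<in> T \<Longrightarrow> central_mod I t"
  shows "subgroup T B"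
proof (rule mult.subgroupI)
  have Tc: "T \<subseteq> carrier B"
    using add_subgroup_subset[OF T] .
  note closed = add_subgroup_cong_closed[OF T IT]
  show "T \<subseteq> carrier B" "T \<noteq> {}"
    using Tc add_subgroup_zero[OF T] by auto
  fix t assume t: "t \<in> T"
  then have "cong_mod I (inv t) (\<ominus> t)"
    using Tc cong_mod_sym[OF I] central_mod_lam_left[OF central[OF t]] by (auto simp: neg_eq_lam_inv)
  then show "inv t \<in> T"
    using closed add_subgroup_neg_closed[OF T t] by blast
  fix t' assume t': "t' \<in> T"
  then have "lam t t' \<in> T"
    using closed central_mod_lam_left[OF central[OF t]] Tc by blast
  then have "t \<oplus> lam t t' \<in> T"
    using add_subgroup_add_closed[OF T t] by blast
  moreover have "t \<otimes> t' = t \<oplus> lam t t'"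
    using t t' Tc by (auto intro: mult_eq_add_lam)
  ultimately show "t \<otimes> t' \<in> T"
    by simp
qed

lemma central_add_subgroup_is_ideal:
  assumes T: "subgroup T (add_monoid B)" and IT: "I \<subseteq> T"
    and central: "\<And>t. t \<in> T \<Longrightarrow> central_mod I t"
  shows "brace_ideal B T"
proof -
  have Tc: "T \<subseteq> carrier B"
    using add_subgroup_subset[OF T] .
  note closed = add_subgroup_cong_closed[OF T IT]
  show ?thesis
  proof (rule brace_idealI[OF T central_add_subgroup_is_mult_subgroup[OF T IT central]])
    fix x t assume x: "x \<in> carrier B" and t: "t \<in> T"
    have tc: "t \<in> carrier B"
      using t Tc by auto
    have "cong_mod I (x \<oplus> t \<oplus> \<ominus> x) (t \<oplus> x \<oplus> \<ominus> x)"
      using cong_mod_add[OF I cong_mod_sym[OF I central_mod_add_comm[OF central[OF t] x]]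
          cong_mod_refl[OF I add.inv_closed[OF x]]] .
    then show "x \<oplus> t \<oplus> \<ominus> x \<in> T"
      using closed t x tc by (simp add: add_group_simps)
    have "cong_mod I (x \<otimes> t \<otimes> inv x) (t \<otimes> x \<otimes> inv x)"
      using cong_mod_mult[OF I cong_mod_sym[OF I central_mod_mult_comm[OF central[OF t] x]]
          cong_mod_refl[OF I mult.inv_closed[OF x]]] .
    then show "x \<otimes> t \<otimes> inv x \<in> T"
      using closed t x tc by (simp add: mult.m_assoc)
    show "lam x t \<in> T"
      using closed central_mod_lam_right[OF central[OF t] x] t by blast
  qed
qed

lemma central_mult_subgroup_is_add_subgroup:
  assumes T: "subgroup T B" and IT: "I \<subseteq> T"
    and central: "\<And>t. t \<in> T \<Longrightarrow> central_mod I t"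
  shows "subgroup T (add_monoid B)"
proof -
  have Tc: "T \<subseteq> carrier B"
    using subgroup.subset[OF T] .
  note closed = mult_subgroup_cong_closed[OF I T IT]
  show ?thesis
  proof (rule add_subgroupI[OF Tc mult_subgroup_zero[OF T]])
    fix t t' assume t: "t \<in> T" and t': "t' \<in> T"
    have it: "inv t \<in> T"
      using subgroup.m_inv_closed[OF T t] .
    then have "lam (inv t) t' \<in> T"
      using closed central_mod_lam_left[OF central[OF it]] t' Tc by blast
    then have "t \<otimes> lam (inv t) t' \<in> T"
      using subgroup.m_closed[OF T t] by blast
    moreover have "t \<oplus> t' = t \<otimes> lam (inv t) t'"
      using t t' Tc by (auto intro: add_eq_mult_lam)
    ultimately show "t \<oplus> t' \<in> T"
      by simp
  next
    fix t assume t: "t \<in> T"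
    then have "cong_mod I (\<ominus> t) (inv t)"
      using central_mod_lam_left[OF central[OF t]] Tc by (auto simp: neg_eq_lam_inv)
    then show "\<ominus> t \<in> T"
      using closed subgroup.m_inv_closed[OF T t] by blast
  qed
qed

lemma ideal_central_mod: "brace_ideal B {a. central_mod I a}"
proof (rule central_add_subgroup_is_ideal)
  show "subgroup {a. central_mod I a} (add_monoid B)"
    by (rule add_subgroupI)
      (auto simp: central_mod_carrier central_mod_zero central_mod_add central_mod_neg)
  show "I \<subseteq> {a. central_mod I a}"
    using central_mod_ideal_elem by blast
qed auto

end

section \<open>The quotient brace and the upper central series\<close>

abbreviation quot :: "'a set \<Rightarrow> 'a set ring"
  where "quot I \<equiv> brace_quot B I"

lemma carrier_quot: "carrier (quot I) = {I +> a | a. a \<in> carrier B}"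
  unfolding brace_quot_def A_RCOSETS_def RCOSETS_def a_r_coset_def by auto

lemma coset_in_carrier_quot: "a \<in> carrier B \<Longrightarrow> I +> a \<in> carrier (quot I)"
  by (auto simp: carrier_quot)

lemma ball_carrier_quot: "(\<forall>Y\<in>carrier (quot I). P Y) \<longleftrightarrow> (\<forall>b\<in>carrier B. P (I +> b))"
  by (auto simp: carrier_quot)

context
  fixes I
  assumes I: "brace_ideal B I"
begin

lemma mem_coset_iff_cong: "a \<in> carrier B \<Longrightarrow> x \<in> I +> a \<longleftrightarrow> cong_mod I x a"
  unfolding a_r_coset_def' using cong_modD cong_modI[OF I] ideal_subset[OF I] by auto

lemma coset_eq_iff_cong:
  assumes a: "a \<in> carrier B" and b: "b \<in> carrier B"
  shows "I +> a = I +> b \<longleftrightarrow> cong_mod I a b"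
  using mem_coset_iff_cong[OF a] mem_coset_iff_cong[OF b] cong_mod_refl[OF I] cong_mod_sym[OF I]
    cong_mod_trans[OF I] a b
  by blast

lemma add_coset_eq_mult_coset:
  assumes a: "a \<in> carrier B"
  shows "I +> a = I #> a"
proof (intro Set.set_eqI iffI)
  fix x assume "x \<in> I +> a"
  then have "cong_mod I x a"
    using mem_coset_iff_cong[OF a] by simp
  then have "cong_mod I (x \<otimes> inv a) (a \<otimes> inv a)"
    using cong_mod_mult[OF I _ cong_mod_refl[OF I mult.inv_closed[OF a]]] by blast
  then have "cong_mod I (x \<otimes> inv a) \<zero>"
    using a by simp
  then have "x \<otimes> inv a \<in> I"
    using cong_mod_zero_iff[OF I] cong_mod_carrier(1) by blast
  moreover have "x = x \<otimes> inv a \<otimes> a"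
    using a \<open>cong_mod I x a\<close> cong_mod_carrier by (simp add: mult.m_assoc)
  ultimately show "x \<in> I #> a"
    unfolding r_coset_def by blast
next
  fix x assume "x \<in> I #> a"
  then obtain h where h: "h \<in> I" "x = h \<otimes> a"
    unfolding r_coset_def by blast
  then have "cong_mod I (h \<oplus> lam h a) a"
    using cong_mod_add[OF I _ lam_ideal_cong[OF I h(1) a], of h \<zero>] h(1) a ideal_subset[OF I]
    by (auto simp: cong_mod_zero_iff[OF I])
  then show "x \<in> I +> a"
    using h a ideal_subset[OF I] mem_coset_iff_cong[OF a] by (auto simp: mult_eq_add_lam)
qed

lemma zero_quot: "ring.zero (quot I) = I +> \<zero>"
  using add.coset_mult_one[OF ideal_subset[OF I]] by (simp add: brace_quot_def a_r_coset_def)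

lemma add_quot:
  assumes "a \<in> carrier B" "b \<in> carrier B"
  shows "ring.add (quot I) (I +> a) (I +> b) = I +> (a \<oplus> b)"
  using normal.rcos_sum[of I "add_monoid B" a b] I assms
  by (simp add: brace_quot_def brace_ideal_def a_r_coset_def set_add_def)

lemma mult_quot:
  assumes "a \<in> carrier B" "b \<in> carrier B"
  shows "monoid.mult (quot I) (I +> a) (I +> b) = I +> (a \<otimes> b)"
  using normal.rcos_sum[of I B a b] I assms
  by (simp add: brace_quot_def brace_ideal_def add_coset_eq_mult_coset)

lemma neg_quot:
  assumes a: "a \<in> carrier B"
  shows "a_inv (quot I) (I +> a) = I +> \<ominus> a"
  unfolding a_inv_def[of "quot I"] m_inv_def[of "add_monoid (quot I)"]
proof (rule the_equality, goal_cases)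
  case 1
  show ?case
    using a by (auto simp: carrier_quot add_quot zero_quot)
next
  case (2 Y)
  then obtain c where c: "c \<in> carrier B" "Y = I +> c" "I +> (a \<oplus> c) = I +> \<zero>"
    using a by (auto simp: carrier_quot add_quot zero_quot)
  then have "cong_mod I (a \<oplus> c) \<zero>"
    using a coset_eq_iff_cong by simp
  then have "cong_mod I (\<ominus> a \<oplus> (a \<oplus> c)) (\<ominus> a \<oplus> \<zero>)"
    by (rule cong_mod_add[OF I cong_mod_refl[OF I add.inv_closed[OF a]]])
  then show "Y = I +> \<ominus> a"
    using a c coset_eq_iff_cong by simp
qed

lemma lam_quot:
  "\<lbrakk>a \<in> carrier B; b \<in> carrier B\<rbrakk> \<Longrightarrow> blambda (quot I) (I +> a) (I +> b) = I +> lam a b"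
  by (simp add: blambda_def neg_quot mult_quot add_quot lam_eq)

lemma coset_in_socle_iff:
  assumes a: "a \<in> carrier B"
  shows "I +> a \<in> socle (quot I) \<longleftrightarrow>
    (\<forall>b\<in>carrier B. cong_mod I (lam a b) b \<and> cong_mod I (a \<oplus> b) (b \<oplus> a))"
proof -
  have "I +> a \<in> socle (quot I) \<longleftrightarrow>
      (\<forall>b\<in>carrier B. blambda (quot I) (I +> a) (I +> b) = I +> b) \<and>
      (\<forall>b\<in>carrier B. ring.add (quot I) (I +> a) (I +> b) = ring.add (quot I) (I +> b) (I +> a))"
    unfolding socle_def ball_carrier_quot using coset_in_carrier_quot[OF a] by blast
  also have "\<dots> \<longleftrightarrow> (\<forall>b\<in>carrier B. I +> lam a b = I +> b \<and> I +> (a \<oplus> b) = I +> (b \<oplus> a))"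
    using a by (auto simp: lam_quot add_quot)
  finally show ?thesis
    using a by (simp add: coset_eq_iff_cong)
qed

lemma coset_in_bcentre_iff:
  assumes a: "a \<in> carrier B"
  shows "I +> a \<in> bcentre (quot I) \<longleftrightarrow> central_mod I a"
proof -
  have "I +> a \<in> bcentre (quot I) \<longleftrightarrow> I +> a \<in> socle (quot I) \<and>
      (\<forall>b\<in>carrier B. monoid.mult (quot I) (I +> a) (I +> b) = monoid.mult (quot I) (I +> b) (I +> a))"
    unfolding bcentre_def ball_carrier_quot by blast
  also have "\<dots> \<longleftrightarrow> I +> a \<in> socle (quot I) \<and> (\<forall>b\<in>carrier B. I +> (a \<otimes> b) = I +> (b \<otimes> a))"
    using a by (auto simp: mult_quot)
  finally show ?thesis
    using a by (auto simp: coset_in_socle_iff coset_eq_iff_cong central_mod_iff[OF I])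
qed

end

lemma zeta_series_Suc_eq:
  assumes "brace_ideal B (zeta_series B k)"
  shows "zeta_series B (Suc k) = {a. central_mod (zeta_series B k) a}"
  using coset_in_bcentre_iff[OF assms] central_mod_carrier by auto

lemma ideal_zeta_series: "brace_ideal B (zeta_series B k)"
proof (induction k)
  case 0
  show ?case
    using brace_ideal_zero by simp
next
  case (Suc k)
  show ?case
    using ideal_central_mod[OF Suc] by (simp only: zeta_series_Suc_eq[OF Suc])
qed

section \<open>The lower central series\<close>

definition star :: "'a \<Rightarrow> 'a \<Rightarrow> 'a"
  where "star a b = lam a b \<oplus> \<ominus> b"

definition add_commutator :: "'a \<Rightarrow> 'a \<Rightarrow> 'a"
  where "add_commutator a b = a \<oplus> b \<oplus> \<ominus> (b \<oplus> a)"

lemma star_closed [simp]: "\<lbrakk>a \<in> carrier B; b \<in> carrier B\<rbrakk> \<Longrightarrow> star a b \<in> carrier B"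
  by (simp add: star_def)

lemma add_commutator_closed [simp]:
  "\<lbrakk>a \<in> carrier B; b \<in> carrier B\<rbrakk> \<Longrightarrow> add_commutator a b \<in> carrier B"
  by (simp add: add_commutator_def)

definition commutators :: "'a set \<Rightarrow> 'a set \<Rightarrow> 'a set"
  where "commutators A C = (\<Union>a\<in>A. \<Union>c\<in>C. {star a c, star c a, add_commutator a c})"

lemma commutators_subset: "\<lbrakk>A \<subseteq> carrier B; C \<subseteq> carrier B\<rbrakk> \<Longrightarrow> commutators A C \<subseteq> carrier B"
  unfolding commutators_def by (blast intro: star_closed add_commutator_closed)

lemma finite_commutators: "\<lbrakk>finite A; finite C\<rbrakk> \<Longrightarrow> finite (commutators A C)"
  unfolding commutators_def by auto

lemma central_mod_iff_commutators:
  "central_mod I a \<longleftrightarrow> a \<in> carrier B \<and> commutators {a} (carrier B) \<subseteq> I"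
proof -
  have "central_mod I a \<longleftrightarrow> a \<in> carrier B \<and>
      (\<forall>b\<in>carrier B. star a b \<in> I \<and> star b a \<in> I \<and> add_commutator a b \<in> I)"
    unfolding central_mod_def cong_mod_def star_def add_commutator_def by auto
  then show ?thesis
    unfolding commutators_def by blast
qed

definition ideal_gen :: "'a set \<Rightarrow> 'a set"
  where "ideal_gen S = \<Inter>{I. brace_ideal B I \<and> S \<subseteq> I}"

lemma brace_ideal_Inter:
  assumes "F \<noteq> {}" "\<And>I. I \<in> F \<Longrightarrow> brace_ideal B I"
  shows "brace_ideal B (\<Inter>F)"
proof (rule brace_idealI)
  show "subgroup (\<Inter>F) (add_monoid B)"
    using add.subgroups_Inter[of F] assms ideal_add_subgroup by blast
  show "subgroup (\<Inter>F) B"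
    using mult.subgroups_Inter[of F] assms ideal_mult_subgroup by blast
  show "\<And>x h. \<lbrakk>x \<in> carrier B; h \<in> \<Inter>F\<rbrakk> \<Longrightarrow> x \<oplus> h \<oplus> \<ominus> x \<in> \<Inter>F"
    using assms(2) ideal_add_conj_closed by blast
  show "\<And>x h. \<lbrakk>x \<in> carrier B; h \<in> \<Inter>F\<rbrakk> \<Longrightarrow> x \<otimes> h \<otimes> inv x \<in> \<Inter>F"
    using assms(2) ideal_mult_conj_closed by blast
  show "\<And>x h. \<lbrakk>x \<in> carrier B; h \<in> \<Inter>F\<rbrakk> \<Longrightarrow> lam x h \<in> \<Inter>F"
    using assms(2) ideal_lam_closed by blast
qed

lemma ideal_ideal_gen: "S \<subseteq> carrier B \<Longrightarrow> brace_ideal B (ideal_gen S)"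
  unfolding ideal_gen_def using brace_ideal_carrier by (intro brace_ideal_Inter) auto

lemma ideal_gen_incl: "S \<subseteq> ideal_gen S"
  unfolding ideal_gen_def by auto

lemma ideal_gen_least: "\<lbrakk>brace_ideal B J; S \<subseteq> J\<rbrakk> \<Longrightarrow> ideal_gen S \<subseteq> J"
  unfolding ideal_gen_def by auto

primrec lower_central :: "nat \<Rightarrow> 'a set"
  where
    "lower_central 0 = carrier B"
  | "lower_central (Suc n) = ideal_gen (commutators (lower_central n) (carrier B))"

lemma lower_central_subset: "lower_central n \<subseteq> carrier B"
proof (induction n)
  case (Suc n)
  then show ?case
    using ideal_gen_least[OF brace_ideal_carrier commutators_subset] by simp
qed simp

lemma lower_central_carrier: "a \<in> lower_central n \<Longrightarrow> a \<in> carrier B"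
  using lower_central_subset by blast

lemma ideal_lower_central: "brace_ideal B (lower_central n)"
  by (cases n) (simp_all add: brace_ideal_carrier ideal_ideal_gen commutators_subset lower_central_subset)

lemma commutators_lower_central: "commutators (lower_central n) (carrier B) \<subseteq> lower_central (Suc n)"
  using ideal_gen_incl by simp

lemma central_mod_lower_central: "a \<in> lower_central n \<Longrightarrow> central_mod (lower_central (Suc n)) a"
  using commutators_lower_central[of n] lower_central_subset
  unfolding central_mod_iff_commutators commutators_def by blast

lemma lower_central_Suc_least:
  assumes "brace_ideal B J" "\<And>a. a \<in> lower_central n \<Longrightarrow> central_mod J a"
  shows "lower_central (Suc n) \<subseteq> J"
proof -
  have "commutators (lower_central n) (carrier B) \<subseteq> J"
    using assms(2) unfolding central_mod_iff_commutators commutators_def by blast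
  then show ?thesis
    using ideal_gen_least[OF assms(1)] by simp
qed

lemma lower_central_Suc_subset: "lower_central (Suc n) \<subseteq> lower_central n"
  using lower_central_Suc_least[OF ideal_lower_central central_mod_ideal_elem[OF ideal_lower_central]]
  by blast

lemma lower_central_subset_zeta_series:
  assumes c: "zeta_series B c = carrier B" and "i \<le> c"
  shows "lower_central i \<subseteq> zeta_series B (c - i)"
  using \<open>i \<le> c\<close>
proof (induction i)
  case (Suc i)
  then have "lower_central i \<subseteq> zeta_series B (Suc (c - Suc i))"
    by (simp add: Suc_diff_Suc)
  then have "\<And>a. a \<in> lower_central i \<Longrightarrow> central_mod (zeta_series B (c - Suc i)) a"
    using zeta_series_Suc_eq[OF ideal_zeta_series] by blast
  then show ?case
    using lower_central_Suc_least ideal_zeta_series by blast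
qed (use c in simp)

lemma lower_central_eventually_zero:
  assumes "centrally_nilpotent B"
  obtains c where "lower_central c = {\<zero>}"
proof -
  obtain c where c: "zeta_series B c = carrier B"
    using assms unfolding centrally_nilpotent_def by blast
  then have "lower_central c \<subseteq> {\<zero>}"
    using lower_central_subset_zeta_series[OF c, of c] by simp
  then show ?thesis
    using ideal_zero[OF ideal_lower_central] that by blast
qed

lemma central_mod_commutators_mem:
  assumes "brace_ideal B H" "central_mod H z" "b \<in> carrier B"
  shows "star z b \<in> H" "star b z \<in> H" "add_commutator z b \<in> H" "add_commutator b z \<in> H"
proof -
  show "star z b \<in> H" "star b z \<in> H" "add_commutator z b \<in> H"
    using assms(2,3) unfolding central_mod_iff_commutators commutators_def by auto
  show "add_commutator b z \<in> H"
    using cong_mod_sym[OF assms(1) central_mod_add_comm[OF assms(2,3)]]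
    unfolding cong_mod_def add_commutator_def by simp
qed

context
  fixes H
  assumes H: "brace_ideal B H"
begin

lemma star_add_right_mod:
  assumes a: "a \<in> carrier B" and b: "b \<in> carrier B" and b': "b' \<in> carrier B"
    and d: "central_mod H (star a b')"
  shows "cong_mod H (star a (b \<oplus> b')) (star a b \<oplus> star a b')"
proof -
  note [trans] = cong_mod_trans[OF H]
  have "star a (b \<oplus> b') = lam a b \<oplus> (star a b' \<oplus> \<ominus> b)"
    using a b b' by (simp add: star_def lam_add add_group_simps)
  also have "cong_mod H \<dots> (lam a b \<oplus> (\<ominus> b \<oplus> star a b'))"
    using cong_mod_add[OF H cong_mod_refl[OF H] central_mod_add_comm[OF d add.inv_closed[OF b]]] a b
    by simp
  also have "lam a b \<oplus> (\<ominus> b \<oplus> star a b') = star a b \<oplus> star a b'"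
    using a b b' by (simp add: star_def add_group_simps)
  finally show ?thesis .
qed

text \<open>Modulo \<open>H\<close>, \<open>a + a' = a \<cdot> \<lambda>\<^bsub>a\<^sup>-\<^sup>1\<^esub>(a')\<close> with \<open>\<lambda>\<^bsub>a\<^sup>-\<^sup>1\<^esub>(a') = e + a' \<equiv> e \<cdot> a'\<close> for the central
  \<open>e = a\<^sup>-\<^sup>1 \<star> a'\<close>, so \<open>\<lambda>\<^bsub>a + a'\<^esub>\<close> acts like \<open>\<lambda>\<^sub>a \<circ> \<lambda>\<^bsub>a'\<^esub>\<close>.\<close>

lemma star_add_left_mod:
  assumes a: "a \<in> carrier B" and a': "a' \<in> carrier B" and b: "b \<in> carrier B"
    and e: "central_mod H (star (inv a) a')" and d: "central_mod H (star a' b)"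
  shows "cong_mod H (star (a \<oplus> a') b) (star a b \<oplus> star a' b)"
proof -
  note [trans] = cong_mod_trans[OF H]
  define e' where "e' = star (inv a) a'"
  define d' where "d' = star a' b"
  have cc: "e' \<in> carrier B" "d' \<in> carrier B"
    using a a' b by (auto simp: e'_def d'_def)
  have "lam (inv a) a' = e' \<oplus> a'"
    using a a' by (simp add: e'_def star_def add_group_simps)
  also have "cong_mod H \<dots> (e' \<oplus> lam e' a')"
    using cong_mod_add[OF H cong_mod_refl[OF H cc(1)]
        cong_mod_sym[OF H central_mod_lam_left[OF e[folded e'_def] a']]] .
  also have "e' \<oplus> lam e' a' = e' \<otimes> a'"
    using cc a' by (simp add: mult_eq_add_lam)
  finally have "cong_mod H (lam (lam (inv a) a') b) (lam (e' \<otimes> a') b)"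
    using cong_mod_lam_left[OF H b] by blast
  also have "lam (e' \<otimes> a') b = lam e' (lam a' b)"
    using cc a' b by (simp add: lam_mult)
  also have "cong_mod H \<dots> (lam a' b)"
    using central_mod_lam_left[OF e[folded e'_def]] a' b by simp
  also have "lam a' b = d' \<oplus> b"
    using a' b by (simp add: d'_def star_def add_group_simps)
  finally have inner: "cong_mod H (lam (lam (inv a) a') b) (d' \<oplus> b)" .
  have "star (a \<oplus> a') b = lam a (lam (lam (inv a) a') b) \<oplus> \<ominus> b"
    using a a' b by (simp add: star_def add_eq_mult_lam lam_mult)
  also have "cong_mod H \<dots> (lam a (d' \<oplus> b) \<oplus> \<ominus> b)"
    using cong_mod_add[OF H cong_mod_lam_right[OF H a inner] cong_mod_refl[OF H add.inv_closed[OF b]]] .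
  also have "lam a (d' \<oplus> b) \<oplus> \<ominus> b = lam a d' \<oplus> (lam a b \<oplus> \<ominus> b)"
    using a b cc by (simp add: lam_add add_group_simps)
  also have "cong_mod H \<dots> (d' \<oplus> (lam a b \<oplus> \<ominus> b))"
    using cong_mod_add[OF H central_mod_lam_right[OF d[folded d'_def] a] cong_mod_refl[OF H]] a b
    by simp
  also have "d' \<oplus> (lam a b \<oplus> \<ominus> b) = d' \<oplus> star a b"
    by (simp add: star_def)
  also have "cong_mod H \<dots> (star a b \<oplus> d')"
    using central_mod_add_comm[OF d[folded d'_def]] a b by simp
  finally show ?thesis
    by (simp add: d'_def)
qed

lemma star_mult_left_mod:
  assumes a: "a \<in> carrier B" and b: "b \<in> carrier B" and b': "b' \<in> carrier B"
    and e: "central_mod H (star b' a)"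
  shows "cong_mod H (star (b \<otimes> b') a) (star b a \<oplus> star b' a)"
proof -
  note [trans] = cong_mod_trans[OF H]
  define e' where "e' = star b' a"
  have e'c: "e' \<in> carrier B"
    using a b' by (simp add: e'_def)
  have "lam b' a = e' \<oplus> a"
    using a b' by (simp add: e'_def star_def add_group_simps)
  then have "star (b \<otimes> b') a = lam b e' \<oplus> (lam b a \<oplus> \<ominus> a)"
    using a b b' e'c by (simp add: star_def lam_mult lam_add add_group_simps)
  also have "cong_mod H \<dots> (e' \<oplus> (lam b a \<oplus> \<ominus> a))"
    using cong_mod_add[OF H central_mod_lam_right[OF e[folded e'_def] b] cong_mod_refl[OF H]] a b
    by simp
  also have "cong_mod H \<dots> ((lam b a \<oplus> \<ominus> a) \<oplus> e')"
    using central_mod_add_comm[OF e[folded e'_def], of "lam b a \<oplus> \<ominus> a"] a b by simp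
  also have "(lam b a \<oplus> \<ominus> a) \<oplus> e' = star b a \<oplus> star b' a"
    by (simp add: star_def e'_def)
  finally show ?thesis .
qed

lemma add_commutator_add_right_mod:
  assumes a: "a \<in> carrier B" and b: "b \<in> carrier B" and b': "b' \<in> carrier B"
    and c': "central_mod H (add_commutator a b')"
  shows "cong_mod H (add_commutator a (b \<oplus> b')) (add_commutator a b \<oplus> add_commutator a b')"
proof -
  note [trans] = cong_mod_trans[OF H]
  define c where "c = add_commutator a b"
  define c' where "c' = add_commutator a b'"
  have cc: "c \<in> carrier B" "c' \<in> carrier B"
    using a b b' by (auto simp: c_def c'_def)
  have "add_commutator a (b \<oplus> b') = c \<oplus> (b \<oplus> c') \<oplus> ((b' \<oplus> a) \<oplus> \<ominus> (b \<oplus> b' \<oplus> a))"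
    using a b b' by (simp add: add_commutator_def c_def c'_def add_group_simps)
  also have "cong_mod H \<dots> (c \<oplus> (c' \<oplus> b) \<oplus> ((b' \<oplus> a) \<oplus> \<ominus> (b \<oplus> b' \<oplus> a)))"
    using a b b' cc
      cong_mod_add[OF H cong_mod_add[OF H cong_mod_refl[OF H cc(1)]
          cong_mod_sym[OF H central_mod_add_comm[OF c'[folded c'_def] b]]] cong_mod_refl[OF H]]
    by simp
  also have "c \<oplus> (c' \<oplus> b) \<oplus> ((b' \<oplus> a) \<oplus> \<ominus> (b \<oplus> b' \<oplus> a)) = c \<oplus> c'"
    using a b b' cc by (simp add: add_commutator_def c'_def add_group_simps)
  finally show ?thesis
    by (simp add: c_def c'_def)
qed

lemma add_commutator_add_left_mod:
  assumes a: "a \<in> carrier B" and a': "a' \<in> carrier B" and b: "b \<in> carrier B"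
    and c': "central_mod H (add_commutator a' b)"
  shows "cong_mod H (add_commutator (a \<oplus> a') b) (add_commutator a b \<oplus> add_commutator a' b)"
proof -
  note [trans] = cong_mod_trans[OF H]
  define c where "c = add_commutator a b"
  define c' where "c' = add_commutator a' b"
  have cc: "c \<in> carrier B" "c' \<in> carrier B"
    using a a' b by (auto simp: c_def c'_def)
  have "add_commutator (a \<oplus> a') b = (a \<oplus> c') \<oplus> ((b \<oplus> a') \<oplus> \<ominus> (b \<oplus> (a \<oplus> a')))"
    using a a' b by (simp add: add_commutator_def c'_def add_group_simps)
  also have "cong_mod H \<dots> ((c' \<oplus> a) \<oplus> ((b \<oplus> a') \<oplus> \<ominus> (b \<oplus> (a \<oplus> a'))))"
    using a a' b cc
      cong_mod_add[OF H cong_mod_sym[OF H central_mod_add_comm[OF c'[folded c'_def] a]] cong_mod_refl[OF H]]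
    by simp
  also have "(c' \<oplus> a) \<oplus> ((b \<oplus> a') \<oplus> \<ominus> (b \<oplus> (a \<oplus> a'))) = c' \<oplus> c"
    using a a' b cc by (simp add: add_commutator_def c_def add_group_simps)
  also have "cong_mod H \<dots> (c \<oplus> c')"
    using central_mod_add_comm[OF c'[folded c'_def] cc(1)] .
  finally show ?thesis
    by (simp add: c_def c'_def)
qed

end

section \<open>Finite generation of the lower central factors\<close>

abbreviation add_gen :: "'a set \<Rightarrow> 'a set"
  where "add_gen S \<equiv> generate (add_monoid B) S"

abbreviation mult_gen :: "'a set \<Rightarrow> 'a set"
  where "mult_gen S \<equiv> generate B S"

lemma add_gen_incl: "S \<subseteq> add_gen S"
  by (auto intro: generate.incl)

lemma mult_gen_incl: "S \<subseteq> mult_gen S"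
  by (auto intro: generate.incl)

lemma add_gen_subgroup_eq: "subgroup S (add_monoid B) \<Longrightarrow> add_gen S = S"
  using add.generate_subgroup_incl[OF subset_refl] add_gen_incl[of S] by blast

lemma add_gen_eqI:
  assumes "S \<subseteq> carrier B" "S' \<subseteq> carrier B" "S \<subseteq> add_gen S'" "S' \<subseteq> add_gen S"
  shows "add_gen S = add_gen S'"
  using assms by (meson add.generate_is_subgroup add.generate_subgroup_incl subset_antisym)

lemma add_subgroup_mem_if_cong_double:
  assumes T: "subgroup T (add_monoid B)" and "cong_mod T x (x \<oplus> x)"
  shows "x \<in> T"
proof -
  have x: "x \<in> carrier B"
    using assms(2) cong_mod_carrier by blast
  then have "x \<oplus> \<ominus> (x \<oplus> x) = \<ominus> x"
    by (simp add: add_group_simps)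
  then have "\<ominus> x \<in> T"
    using assms(2) unfolding cong_mod_def by simp
  then show ?thesis
    using add_subgroup_neg_closed[OF T] x by fastforce
qed

lemma generate_hom_mod_subset:
  assumes G: "group G" and D: "subgroup D G" and SD: "S \<subseteq> D"
    and T: "subgroup T (add_monoid B)"
    and closed: "\<And>x. x \<in> D \<Longrightarrow> \<phi> x \<in> carrier B"
    and hom: "\<And>x y. \<lbrakk>x \<in> D; y \<in> D\<rbrakk> \<Longrightarrow> cong_mod T (\<phi> (x \<otimes>\<^bsub>G\<^esub> y)) (\<phi> x \<oplus> \<phi> y)"
    and gens: "\<And>x. x \<in> S \<Longrightarrow> \<phi> x \<in> T"
  shows "\<phi> ` generate G S \<subseteq> T"
proof -
  interpret G: group G by (rule G)
  have one: "\<one>\<^bsub>G\<^esub> \<in> D"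
    using subgroup.one_closed[OF D] .
  have phi_one: "\<phi> \<one>\<^bsub>G\<^esub> \<in> T"
    using add_subgroup_mem_if_cong_double[OF T] hom[OF one one] by simp
  have "\<phi> g \<in> T" if "g \<in> generate G S" for g
    using that
  proof (induction rule: generate.induct)
    case one
    then show ?case
      using phi_one .
  next
    case (incl h)
    then show ?case
      by (rule gens)
  next
    case (inv h)
    then have h: "h \<in> D" "inv\<^bsub>G\<^esub> h \<in> D"
      using SD subgroup.m_inv_closed[OF D] by auto
    then obtain t where "t \<in> T" "\<phi> \<one>\<^bsub>G\<^esub> = t \<oplus> (\<phi> h \<oplus> \<phi> (inv\<^bsub>G\<^esub> h))"
      using cong_modD[OF hom[OF h]] subgroup.subset[OF D] by auto
    then have "\<phi> (inv\<^bsub>G\<^esub> h) = \<ominus> \<phi> h \<oplus> (\<ominus> t \<oplus> \<phi> \<one>\<^bsub>G\<^esub>)"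
      using closed h one add_subgroup_subset[OF T] by (auto simp: add_group_simps)
    then show ?case
      using inv gens phi_one \<open>t \<in> T\<close>
      by (simp add: add_subgroup_add_closed[OF T] add_subgroup_neg_closed[OF T])
  next
    case (eng h1 h2)
    then have "h1 \<in> D" "h2 \<in> D"
      using G.generate_subgroup_incl[OF SD D] by auto
    then show ?case
      using eng hom add_subgroup_cong_closed[OF T subset_refl] add_subgroup_add_closed[OF T] by blast
  qed
  then show ?thesis
    by blast
qed

lemma bihom_mod_subset:
  assumes G: "group G" "carrier G = carrier B" and Bgen: "carrier B \<subseteq> generate G (Y \<union> K)"
    and Y: "Y \<subseteq> carrier B"
    and A: "subgroup A (add_monoid B)" "F \<subseteq> A" "K \<subseteq> A" "A \<subseteq> add_gen (F \<union> K)"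
    and T: "subgroup T (add_monoid B)"
    and closed: "\<And>a b. \<lbrakk>a \<in> A; b \<in> carrier B\<rbrakk> \<Longrightarrow> f a b \<in> carrier B"
    and hom_left: "\<And>a a' b. \<lbrakk>a \<in> A; a' \<in> A; b \<in> carrier B\<rbrakk> \<Longrightarrow>
      cong_mod T (f (a \<oplus> a') b) (f a b \<oplus> f a' b)"
    and hom_right: "\<And>a b b'. \<lbrakk>a \<in> A; b \<in> carrier B; b' \<in> carrier B\<rbrakk> \<Longrightarrow>
      cong_mod T (f a (b \<otimes>\<^bsub>G\<^esub> b')) (f a b \<oplus> f a b')"
    and kill_left: "\<And>z b. \<lbrakk>z \<in> K; b \<in> carrier B\<rbrakk> \<Longrightarrow> f z b \<in> T"
    and kill_right: "\<And>a z. \<lbrakk>a \<in> A; z \<in> K\<rbrakk> \<Longrightarrow> f a z \<in> T"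
    and gens: "\<And>x y. \<lbrakk>x \<in> F; y \<in> Y\<rbrakk> \<Longrightarrow> f x y \<in> T"
  assumes "a \<in> A" "b \<in> carrier B"
  shows "f a b \<in> T"
proof -
  have Ac: "A \<subseteq> carrier B"
    using add_subgroup_subset[OF A(1)] .
  have on_F: "f x b \<in> T" if x: "x \<in> F" and b: "b \<in> carrier B" for x b
  proof -
    have "f x ` generate G (Y \<union> K) \<subseteq> T"
      using x A(2,3) Ac Y G(2) closed hom_right kill_right gens
      by (intro generate_hom_mod_subset[OF G(1) group.subgroup_self[OF G(1)] _ T]) auto
    then show ?thesis
      using Bgen b by blast
  qed
  have "(\<lambda>a. f a b) ` add_gen (F \<union> K) \<subseteq> T"
    using A(2,3) \<open>b \<in> carrier B\<close> closed hom_left kill_left on_F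
    by (intro generate_hom_mod_subset[OF add.is_group A(1) _ T]) auto
  then show ?thesis
    using A(4) \<open>a \<in> A\<close> by blast
qed

definition add_fin_gen_mod :: "'a set \<Rightarrow> 'a set \<Rightarrow> bool"
  where "add_fin_gen_mod I J \<longleftrightarrow> (\<exists>F. finite F \<and> F \<subseteq> I \<and> I \<subseteq> add_gen (F \<union> J))"

definition generates_mod :: "'a set \<Rightarrow> 'a set \<Rightarrow> bool"
  where "generates_mod Y I \<longleftrightarrow> finite Y \<and> Y \<subseteq> carrier B \<and>
    carrier B \<subseteq> add_gen (Y \<union> I) \<and> carrier B \<subseteq> mult_gen (Y \<union> I)"

lemma lower_central_commutator_mem:
  assumes "a \<in> lower_central n" "b \<in> carrier B"
  shows "star a b \<in> lower_central (Suc n)" "star b a \<in> lower_central (Suc n)"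
    "add_commutator a b \<in> lower_central (Suc n)"
  using commutators_lower_central[of n] assms unfolding commutators_def by blast+

lemma add_fin_gen_mod_lower_central_0:
  assumes "finitely_generated_brace B"
  shows "add_fin_gen_mod (lower_central 0) (lower_central 1)"
proof -
  obtain S where S: "finite S" "S \<subseteq> carrier B" "generated_subbrace B S = carrier B"
    using assms unfolding finitely_generated_brace_def by blast
  define T where "T = add_gen (S \<union> lower_central 1)"
  have T: "subgroup T (add_monoid B)"
    unfolding T_def using S(2) lower_central_subset by (intro add.generate_is_subgroup) blast
  have "brace_ideal B T"
  proof (rule central_add_subgroup_is_ideal[OF ideal_lower_central T])
    show "lower_central 1 \<subseteq> T"
      unfolding T_def using add_gen_incl by blast
    show "central_mod (lower_central 1) t" if "t \<in> T" for t
      using central_mod_lower_central[of t 0] add_subgroup_subset[OF T] that by auto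
  qed
  moreover have "S \<subseteq> T"
    unfolding T_def using add_gen_incl by blast
  ultimately have "generated_subbrace B S \<subseteq> T"
    unfolding generated_subbrace_def brace_ideal_def by blast
  then show ?thesis
    unfolding add_fin_gen_mod_def T_def using S by (intro exI[of _ S]) auto
qed

lemma generates_mod_lower_central_Suc:
  assumes Y: "generates_mod Y (lower_central n)"
    and F: "finite F" "F \<subseteq> lower_central n" "lower_central n \<subseteq> add_gen (F \<union> lower_central (Suc n))"
  shows "generates_mod (Y \<union> F) (lower_central (Suc n))"
proof -
  let ?\<Gamma> = lower_central
  have FG: "F \<union> ?\<Gamma> (Suc n) \<subseteq> ?\<Gamma> n"
    using F lower_central_Suc_subset by blast
  have YF: "Y \<union> F \<union> ?\<Gamma> (Suc n) \<subseteq> carrier B"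
    using Y F lower_central_subset unfolding generates_mod_def by blast
  have "add_gen (F \<union> ?\<Gamma> (Suc n)) \<subseteq> add_gen (Y \<union> F \<union> ?\<Gamma> (Suc n))"
    by (rule add.mono_generate) blast
  then have "Y \<union> ?\<Gamma> n \<subseteq> add_gen (Y \<union> F \<union> ?\<Gamma> (Suc n))"
    using F(3) add_gen_incl[of "Y \<union> F \<union> ?\<Gamma> (Suc n)"] by blast
  then have add: "carrier B \<subseteq> add_gen (Y \<union> F \<union> ?\<Gamma> (Suc n))"
    using add.generate_subgroup_incl[OF _ add.generate_is_subgroup[OF YF]] Y
    unfolding generates_mod_def by blast
  define T where "T = mult_gen (F \<union> ?\<Gamma> (Suc n))"
  have T: "subgroup T B"
    unfolding T_def using FG lower_central_subset by (intro mult.generate_is_subgroup) blast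
  have FT: "F \<union> ?\<Gamma> (Suc n) \<subseteq> T"
    unfolding T_def using mult_gen_incl by blast
  have "T \<subseteq> ?\<Gamma> n"
    unfolding T_def using FG ideal_mult_subgroup[OF ideal_lower_central]
    by (intro mult.generate_subgroup_incl)
  then have "subgroup T (add_monoid B)"
    using FT central_mod_lower_central[of _ n]
    by (intro central_mult_subgroup_is_add_subgroup[OF ideal_lower_central[of "Suc n"] T]) blast+
  then have "?\<Gamma> n \<subseteq> T"
    using F(3) FT add.generate_subgroup_incl by blast
  moreover have "T \<subseteq> mult_gen (Y \<union> F \<union> ?\<Gamma> (Suc n))"
    unfolding T_def by (rule mult.mono_generate) blast
  ultimately have "Y \<union> ?\<Gamma> n \<subseteq> mult_gen (Y \<union> F \<union> ?\<Gamma> (Suc n))"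
    using mult_gen_incl[of "Y \<union> F \<union> ?\<Gamma> (Suc n)"] by blast
  then have "carrier B \<subseteq> mult_gen (Y \<union> F \<union> ?\<Gamma> (Suc n))"
    using mult.generate_subgroup_incl[OF _ mult.generate_is_subgroup[OF YF]] Y
    unfolding generates_mod_def by blast
  then show ?thesis
    using add Y F YF unfolding generates_mod_def by (simp add: Un_assoc)
qed

context
  fixes n :: nat and Y F T :: "'a set"
  assumes Y: "generates_mod Y (lower_central (Suc n))"
    and F: "F \<subseteq> lower_central n" "lower_central n \<subseteq> add_gen (F \<union> lower_central (Suc n))"
    and T: "subgroup T (add_monoid B)" "lower_central (Suc (Suc n)) \<subseteq> T" "commutators F Y \<subseteq> T"
begin

lemma star_in_commutator_span:
  assumes "a \<in> lower_central n" "b \<in> carrier B"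
  shows "star a b \<in> T"
proof (rule bihom_mod_subset[where f = star, OF add.is_group _ _ _
      ideal_add_subgroup[OF ideal_lower_central] F(1) lower_central_Suc_subset F(2) T(1)])
  note H = ideal_lower_central[of "Suc (Suc n)"]
  note mod_T = cong_mod_mono[OF T(2)]
  note comm = lower_central_commutator_mem[of _ n]
  show "cong_mod T (star (a \<oplus> a') b) (star a b \<oplus> star a' b)"
    if "a \<in> lower_central n" "a' \<in> lower_central n" "b \<in> carrier B" for a a' b
    using that lower_central_carrier comm
    by (auto simp del: lower_central.simps intro!: mod_T star_add_left_mod[OF H] central_mod_lower_central)
  show "cong_mod T (star a (b \<otimes>\<^bsub>add_monoid B\<^esub> b')) (star a b \<oplus> star a b')"
    if "a \<in> lower_central n" "b \<in> carrier B" "b' \<in> carrier B" for a b b'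
    using that lower_central_carrier comm
    by (auto simp del: lower_central.simps intro!: mod_T star_add_right_mod[OF H] central_mod_lower_central)
  show "star z b \<in> T" if "z \<in> lower_central (Suc n)" "b \<in> carrier B" for z b
    using central_mod_commutators_mem(1)[OF H central_mod_lower_central] that T(2) by blast
  show "star a z \<in> T" if "a \<in> lower_central n" "z \<in> lower_central (Suc n)" for a z
    using central_mod_commutators_mem(2)[OF H central_mod_lower_central] that T(2)
      lower_central_subset by blast
  show "star x y \<in> T" if "x \<in> F" "y \<in> Y" for x y
    using T(3) that unfolding commutators_def by blast
qed (use assms Y lower_central_carrier in \<open>auto simp: generates_mod_def simp del: lower_central.simps\<close>)

lemma star_rev_in_commutator_span:
  assumes "a \<in> lower_central n" "b \<in> carrier B"
  shows "star b a \<in> T"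
proof (rule bihom_mod_subset[where f = "\<lambda>a b. star b a", OF mult.is_group _ _ _
      ideal_add_subgroup[OF ideal_lower_central] F(1) lower_central_Suc_subset F(2) T(1)])
  note H = ideal_lower_central[of "Suc (Suc n)"]
  note mod_T = cong_mod_mono[OF T(2)]
  note comm = lower_central_commutator_mem[of _ n]
  show "cong_mod T (star b (a \<oplus> a')) (star b a \<oplus> star b a')"
    if "a \<in> lower_central n" "a' \<in> lower_central n" "b \<in> carrier B" for a a' b
    using that lower_central_carrier comm
    by (auto simp del: lower_central.simps intro!: mod_T star_add_right_mod[OF H] central_mod_lower_central)
  show "cong_mod T (star (b \<otimes> b') a) (star b a \<oplus> star b' a)"
    if "a \<in> lower_central n" "b \<in> carrier B" "b' \<in> carrier B" for a b b'
    using that lower_central_carrier comm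
    by (auto simp del: lower_central.simps intro!: mod_T star_mult_left_mod[OF H] central_mod_lower_central)
  show "star b z \<in> T" if "z \<in> lower_central (Suc n)" "b \<in> carrier B" for z b
    using central_mod_commutators_mem(2)[OF H central_mod_lower_central] that T(2) by blast
  show "star z a \<in> T" if "a \<in> lower_central n" "z \<in> lower_central (Suc n)" for a z
    using central_mod_commutators_mem(1)[OF H central_mod_lower_central] that T(2)
      lower_central_subset by blast
  show "star y x \<in> T" if "x \<in> F" "y \<in> Y" for x y
    using T(3) that unfolding commutators_def by blast
qed (use assms Y lower_central_carrier in \<open>auto simp: generates_mod_def simp del: lower_central.simps\<close>)

lemma add_commutator_in_commutator_span:
  assumes "a \<in> lower_central n" "b \<in> carrier B"
  shows "add_commutator a b \<in> T"
proof (rule bihom_mod_subset[where f = add_commutator, OF add.is_group _ _ _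
      ideal_add_subgroup[OF ideal_lower_central] F(1) lower_central_Suc_subset F(2) T(1)])
  note H = ideal_lower_central[of "Suc (Suc n)"]
  note mod_T = cong_mod_mono[OF T(2)]
  note comm = lower_central_commutator_mem[of _ n]
  show "cong_mod T (add_commutator (a \<oplus> a') b) (add_commutator a b \<oplus> add_commutator a' b)"
    if "a \<in> lower_central n" "a' \<in> lower_central n" "b \<in> carrier B" for a a' b
    using that lower_central_carrier comm
    by (auto simp del: lower_central.simps intro!: mod_T add_commutator_add_left_mod[OF H] central_mod_lower_central)
  show "cong_mod T (add_commutator a (b \<otimes>\<^bsub>add_monoid B\<^esub> b'))
      (add_commutator a b \<oplus> add_commutator a b')"
    if "a \<in> lower_central n" "b \<in> carrier B" "b' \<in> carrier B" for a b b'
    using that lower_central_carrier comm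
    by (auto simp del: lower_central.simps intro!: mod_T add_commutator_add_right_mod[OF H] central_mod_lower_central)
  show "add_commutator z b \<in> T" if "z \<in> lower_central (Suc n)" "b \<in> carrier B" for z b
    using central_mod_commutators_mem(3)[OF H central_mod_lower_central] that T(2) by blast
  show "add_commutator a z \<in> T" if "a \<in> lower_central n" "z \<in> lower_central (Suc n)" for a z
    using central_mod_commutators_mem(4)[OF H central_mod_lower_central] that T(2)
      lower_central_subset by blast
  show "add_commutator x y \<in> T" if "x \<in> F" "y \<in> Y" for x y
    using T(3) that unfolding commutators_def by blast
qed (use assms Y lower_central_carrier in \<open>auto simp: generates_mod_def simp del: lower_central.simps\<close>)

end

lemma add_fin_gen_mod_lower_central_Suc:
  assumes Y: "generates_mod Y (lower_central (Suc n))"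
    and F: "finite F" "F \<subseteq> lower_central n" "lower_central n \<subseteq> add_gen (F \<union> lower_central (Suc n))"
  shows "add_fin_gen_mod (lower_central (Suc n)) (lower_central (Suc (Suc n)))"
proof -
  let ?H = "lower_central (Suc (Suc n))"
  define T where "T = add_gen (commutators F Y \<union> ?H)"
  have FY: "commutators F Y \<subseteq> lower_central (Suc n)"
    using commutators_lower_central[of n] F(2) Y lower_central_subset
    unfolding commutators_def generates_mod_def by blast
  have T: "subgroup T (add_monoid B)"
    unfolding T_def using FY lower_central_subset by (intro add.generate_is_subgroup) blast
  have HT: "?H \<subseteq> T" and gens: "commutators F Y \<subseteq> T"
    unfolding T_def using add_gen_incl by blast+
  have "T \<subseteq> lower_central (Suc n)"
    unfolding T_def using FY lower_central_Suc_subset ideal_add_subgroup[OF ideal_lower_central]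
    by (intro add.generate_subgroup_incl) blast+
  then have "brace_ideal B T"
    using central_mod_lower_central HT by (intro central_add_subgroup_is_ideal[OF ideal_lower_central T]) blast+
  moreover have "commutators (lower_central n) (carrier B) \<subseteq> T"
    using star_in_commutator_span[OF Y F(2,3) T HT gens] star_rev_in_commutator_span[OF Y F(2,3) T HT gens]
      add_commutator_in_commutator_span[OF Y F(2,3) T HT gens]
    unfolding commutators_def by blast
  ultimately have "lower_central (Suc n) \<subseteq> T"
    using ideal_gen_least by simp
  then show ?thesis
    unfolding add_fin_gen_mod_def T_def using FY F(1) Y
    by (intro exI[of _ "commutators F Y"]) (auto simp: finite_commutators generates_mod_def)
qed

lemma add_fin_gen_mod_lower_central:
  assumes "finitely_generated_brace B"
  shows "add_fin_gen_mod (lower_central n) (lower_central (Suc n))"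
proof -
  have "(\<exists>Y. generates_mod Y (lower_central n)) \<and> add_fin_gen_mod (lower_central n) (lower_central (Suc n))"
  proof (induction n)
    case 0
    have "generates_mod {} (lower_central 0)"
      unfolding generates_mod_def using add_gen_incl mult_gen_incl by auto
    then show ?case
      using add_fin_gen_mod_lower_central_0[OF assms] by auto
  next
    case (Suc n)
    then obtain Y F where Y: "generates_mod Y (lower_central n)" and
      F: "finite F" "F \<subseteq> lower_central n" "lower_central n \<subseteq> add_gen (F \<union> lower_central (Suc n))"
      unfolding add_fin_gen_mod_def by blast
    then have "generates_mod (Y \<union> F) (lower_central (Suc n))"
      by (rule generates_mod_lower_central_Suc)
    then show ?case
      using add_fin_gen_mod_lower_central_Suc F by blast
  qed
  then show ?thesis
    by blast
qed

section \<open>Supersoluble series and cyclic central extensions\<close>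

definition supersoluble_factor :: "'a set \<Rightarrow> 'a set \<Rightarrow> bool"
  where "supersoluble_factor J K \<longleftrightarrow>
    (let Q = quot J; S = sub_quot B K J in
      (infinite S \<and> (\<exists>g\<in>S. S = generate (add_monoid Q) {g}) \<and> S \<subseteq> socle Q)
      \<or> Factorial_Ring.prime (card S))"

inductive supersoluble_series :: "'a set \<Rightarrow> 'a set \<Rightarrow> bool"
  where
    refl: "brace_ideal B J \<Longrightarrow> supersoluble_series J J"
  | step: "\<lbrakk>supersoluble_series J K; brace_ideal B L; K \<subseteq> L; supersoluble_factor K L\<rbrakk>
      \<Longrightarrow> supersoluble_series J L"

lemma supersoluble_series_single:
  "\<lbrakk>brace_ideal B J; brace_ideal B K; J \<subseteq> K; supersoluble_factor J K\<rbrakk> \<Longrightarrow> supersoluble_series J K"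
  by (blast intro: supersoluble_series.intros)

lemma supersoluble_series_trans:
  assumes "supersoluble_series J K" "supersoluble_series K L"
  shows "supersoluble_series J L"
  using assms(2,1) by induction (auto intro: supersoluble_series.step)

lemma supersoluble_series_enumerate:
  assumes "supersoluble_series J K"
  shows "\<exists>n I. I 0 = J \<and> I n = K \<and> (\<forall>i\<le>n. brace_ideal B (I i)) \<and> (\<forall>i<n. I i \<subseteq> I (Suc i)) \<and>
    (\<forall>i<n. supersoluble_factor (I i) (I (Suc i)))"
  using assms
proof induction
  case (refl J)
  then show ?case
    by (intro exI[of _ 0] exI[of _ "\<lambda>_. J"]) simp
next
  case (step J K L)
  then obtain n I where I: "I 0 = J" "I n = K" "\<forall>i\<le>n. brace_ideal B (I i)" "\<forall>i<n. I i \<subseteq> I (Suc i)"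
    "\<forall>i<n. supersoluble_factor (I i) (I (Suc i))"
    by blast
  show ?case
    using I step.hyps(2-4)
    by (intro exI[of _ "Suc n"] exI[of _ "I(Suc n := L)"]) (auto simp: le_Suc_eq less_Suc_eq)
qed

lemma supersoluble_if_series: "supersoluble_series {\<zero>} (carrier B) \<Longrightarrow> supersoluble B"
  unfolding supersoluble_def using supersoluble_series_enumerate
  unfolding supersoluble_factor_def by blast

context
  fixes J
  assumes J: "brace_ideal B J"
begin

lemma add_gen_central_mod:
  assumes "\<And>a. a \<in> F \<Longrightarrow> central_mod J a" and "a \<in> add_gen (F \<union> J)"
  shows "central_mod J a"
proof -
  have "add_gen (F \<union> J) \<subseteq> {a. central_mod J a}"
    using assms(1) central_mod_ideal_elem[OF J]
    by (intro add.generate_subgroup_incl ideal_add_subgroup[OF ideal_central_mod[OF J]]) blast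
  then show ?thesis
    using assms(2) by blast
qed

lemma ideal_add_gen_central_mod:
  assumes "\<And>a. a \<in> F \<Longrightarrow> central_mod J a"
  shows "brace_ideal B (add_gen (F \<union> J))"
proof (rule central_add_subgroup_is_ideal[OF J])
  show "subgroup (add_gen (F \<union> J)) (add_monoid B)"
    using assms central_mod_carrier ideal_subset[OF J] by (intro add.generate_is_subgroup) blast
qed (use add_gen_incl add_gen_central_mod[OF assms] in blast)+

end

abbreviation multiple :: "'a \<Rightarrow> int \<Rightarrow> 'a"
  where "multiple g k \<equiv> g [^]\<^bsub>add_monoid B\<^esub> k"

lemma central_mod_multiple: "\<lbrakk>brace_ideal B J; central_mod J g\<rbrakk> \<Longrightarrow> central_mod J (multiple g k)"
  using add.subgroup_int_pow_closed[OF ideal_add_subgroup[OF ideal_central_mod], of J g k] by simp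

lemma coset_multiple_mem_generate:
  assumes J: "brace_ideal B J" and g: "g \<in> carrier B"
  shows "J +> multiple g k \<in> generate (add_monoid (quot J)) {J +> g}"
proof -
  have gen: "J +> g \<in> generate (add_monoid (quot J)) {J +> g}"
    and neg: "J +> \<ominus> g \<in> generate (add_monoid (quot J)) {J +> g}"
    using generate.incl[of "J +> g" "{J +> g}" "add_monoid (quot J)"]
      generate.inv[of "J +> g" "{J +> g}" "add_monoid (quot J)"] neg_quot[OF J g]
    by (auto simp: a_inv_def)
  show ?thesis
  proof (induction k rule: int_induct[of _ 0])
    case base
    show ?case
      using generate.one[of "add_monoid (quot J)"] zero_quot[OF J] by simp
  next
    case (step1 i)
    then show ?case
      using generate.eng[OF step1(2) gen] g add_quot[OF J] add.int_pow_mult[OF g, of i 1] by simp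
  next
    case (step2 i)
    then show ?case
      using generate.eng[OF step2(2) neg] g add_quot[OF J] add.int_pow_diff[OF g, of i 1] by simp
  qed
qed

lemma generate_coset_quot:
  assumes J: "brace_ideal B J" and g: "g \<in> carrier B"
  shows "generate (add_monoid (quot J)) {J +> g} = range (\<lambda>k. J +> multiple g k)"
proof
  show "generate (add_monoid (quot J)) {J +> g} \<subseteq> range (\<lambda>k. J +> multiple g k)"
  proof
    fix C assume "C \<in> generate (add_monoid (quot J)) {J +> g}"
    then show "C \<in> range (\<lambda>k. J +> multiple g k)"
    proof (induction rule: generate.induct)
      case one
      show ?case
        using zero_quot[OF J] by (intro range_eqI[of _ _ 0]) simp
    next
      case (incl h)
      then show ?case
        using g by (intro range_eqI[of _ _ 1]) simp
    next
      case (inv h)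
      then show ?case
        using g neg_quot[OF J g] add.int_pow_neg[OF g, of 1]
        by (intro range_eqI[of _ _ "-1"]) (simp add: a_inv_def)
    next
      case (eng h1 h2)
      then obtain k l where "h1 = J +> multiple g k" "h2 = J +> multiple g l"
        by blast
      then show ?case
        using g add_quot[OF J] add.int_pow_mult[OF g, of k l]
        by (intro range_eqI[of _ _ "k + l"]) simp
    qed
  qed
qed (use coset_multiple_mem_generate[OF J g] in blast)

lemma add_subgroup_cong_multiples:
  assumes J: "brace_ideal B J" and g: "g \<in> carrier B"
  shows "subgroup {a. \<exists>k. cong_mod J a (multiple g k)} (add_monoid B)"
proof (rule add_subgroupI)
  show "{a. \<exists>k. cong_mod J a (multiple g k)} \<subseteq> carrier B"
    using cong_mod_carrier by blast
  show "\<zero> \<in> {a. \<exists>k. cong_mod J a (multiple g k)}"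
    using cong_mod_refl[OF J, of \<zero>] by (intro CollectI exI[of _ 0]) simp
  fix x y
  assume "x \<in> {a. \<exists>k. cong_mod J a (multiple g k)}"
  then obtain k where k: "cong_mod J x (multiple g k)"
    by blast
  then have "cong_mod J (\<ominus> x) (multiple g (- k))"
    using cong_mod_neg[OF J] add.int_pow_neg[OF g] by simp
  then show "\<ominus> x \<in> {a. \<exists>k. cong_mod J a (multiple g k)}"
    by blast
  assume "y \<in> {a. \<exists>k. cong_mod J a (multiple g k)}"
  then obtain l where "cong_mod J y (multiple g l)"
    by blast
  then have "cong_mod J (x \<oplus> y) (multiple g (k + l))"
    using k cong_mod_add[OF J] add.int_pow_mult[OF g] by simp
  then show "x \<oplus> y \<in> {a. \<exists>k. cong_mod J a (multiple g k)}"
    by blast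
qed

context
  fixes J g
  assumes J: "brace_ideal B J" and g: "central_mod J g"
begin

lemma cong_mod_multiple:
  assumes "a \<in> add_gen (insert g J)"
  obtains k where "cong_mod J a (multiple g k)"
proof -
  have gc: "g \<in> carrier B"
    using central_mod_carrier[OF g] .
  have "cong_mod J g (multiple g 1)"
    using cong_mod_refl[OF J gc] gc by simp
  moreover have "cong_mod J h (multiple g 0)" if "h \<in> J" for h
    using that ideal_subset[OF J] cong_mod_zero_iff[OF J] by auto
  ultimately have "insert g J \<subseteq> {a. \<exists>k. cong_mod J a (multiple g k)}"
    by blast
  then have "add_gen (insert g J) \<subseteq> {a. \<exists>k. cong_mod J a (multiple g k)}"
    by (rule add.generate_subgroup_incl[OF _ add_subgroup_cong_multiples[OF J gc]])
  then show ?thesis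
    using assms that by blast
qed

lemma central_mod_add_gen_insert: "a \<in> add_gen (insert g J) \<Longrightarrow> central_mod J a"
  using add_gen_central_mod[OF J, of "{g}"] g by simp

lemma ideal_add_gen_insert: "brace_ideal B (add_gen (insert g J))"
  using ideal_add_gen_central_mod[OF J, of "{g}"] g by simp

lemma sub_quot_add_gen_insert: "sub_quot B (add_gen (insert g J)) J = range (\<lambda>k. J +> multiple g k)"
proof -
  have gc: "g \<in> carrier B"
    using central_mod_carrier[OF g] .
  have K: "subgroup (add_gen (insert g J)) (add_monoid B)"
    using ideal_add_subgroup[OF ideal_add_gen_insert] .
  have "J +> a \<in> range (\<lambda>k. J +> multiple g k)" if a: "a \<in> add_gen (insert g J)" for a
  proof -
    obtain k where "cong_mod J a (multiple g k)"
      using cong_mod_multiple[OF a] .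
    then show ?thesis
      using coset_eq_iff_cong[OF J] cong_mod_carrier gc by blast
  qed
  moreover have "multiple g k \<in> add_gen (insert g J)" for k
    using add.subgroup_int_pow_closed[OF K] add_gen_incl by blast
  ultimately show ?thesis
    unfolding sub_quot_def by blast
qed

lemma sub_quot_add_gen_insert_subset_socle: "sub_quot B (add_gen (insert g J)) J \<subseteq> socle (quot J)"
  unfolding sub_quot_def
  using coset_in_socle_iff[OF J] central_mod_add_gen_insert central_mod_carrier
    central_mod_lam_left central_mod_add_comm
  by blast

end

end

lemma nat_composite_factors:
  fixes m :: nat
  assumes "0 < m" "m \<noteq> 1" "\<not> Factorial_Ring.prime m"
  obtains p r where "m = p * r" "0 < p" "p < m" "0 < r" "r < m"
proof -
  obtain p where p: "p dvd m" "p \<noteq> 1" "p \<noteq> m"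
    using assms unfolding prime_nat_iff by auto
  then obtain r where r: "m = p * r"
    by blast
  have "0 < p" "0 < r"
    using r assms(1) by auto
  then have "1 < p"
    using p(2) by simp
  have "p < m"
    using p assms(1) dvd_imp_le le_neq_implies_less by blast
  moreover have "r < m"
    using mult_less_mono1[OF \<open>1 < p\<close> \<open>0 < r\<close>] r by simp
  ultimately show ?thesis
    using r that \<open>0 < p\<close> \<open>0 < r\<close> by blast
qed

context skew_brace
begin

lemma coset_multiple_eq_iff:
  assumes J: "brace_ideal B J" and g: "g \<in> carrier B"
  shows "J +> multiple g k = J +> multiple g l \<longleftrightarrow> multiple g (k - l) \<in> J"
  using g by (simp add: coset_eq_iff_cong[OF J] cong_mod_def add.int_pow_diff)

lemma range_coset_multiple_torsion:
  assumes J: "brace_ideal B J" and g: "g \<in> carrier B" and p: "0 < p" and pJ: "multiple g (int p) \<in> J"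
  shows "range (\<lambda>k. J +> multiple g k) = (\<lambda>i. J +> multiple g (int i)) ` {0..<p}"
proof (intro equalityI subsetI)
  fix C assume "C \<in> range (\<lambda>k. J +> multiple g k)"
  then obtain k where C: "C = J +> multiple g k"
    by blast
  have "multiple g (k - k mod int p) = multiple (multiple g (int p)) (k div int p)"
    using g by (simp add: add.int_pow_pow minus_mod_eq_mult_div)
  also have "\<dots> \<in> J"
    using add.subgroup_int_pow_closed[OF ideal_add_subgroup[OF J] pJ] .
  finally have "C = J +> multiple g (int (nat (k mod int p)))"
    using C p coset_multiple_eq_iff[OF J g] by simp
  moreover have "nat (k mod int p) \<in> {0..<p}"
    using p by (simp add: nat_less_iff)
  ultimately show "C \<in> (\<lambda>i. J +> multiple g (int i)) ` {0..<p}"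
    by blast
qed auto

lemma inj_on_coset_multiple:
  assumes J: "brace_ideal B J" and g: "g \<in> carrier B"
    and min: "\<And>m. \<lbrakk>0 < m; m < p\<rbrakk> \<Longrightarrow> multiple g (int m) \<notin> J"
  shows "inj_on (\<lambda>i. J +> multiple g (int i)) {0..<p}"
proof (rule inj_onI)
  fix i j
  assume i: "i \<in> {0..<p}" and j: "j \<in> {0..<p}" and "J +> multiple g (int i) = J +> multiple g (int j)"
  then have diff: "multiple g (int i - int j) \<in> J" "multiple g (int j - int i) \<in> J"
    using coset_multiple_eq_iff[OF J g] by metis+
  show "i = j"
  proof (rule ccontr)
    assume "i \<noteq> j"
    then consider "j < i" | "i < j"
      by linarith
    then show False
    proof cases
      case 1
      then show False
        using min[of "i - j"] diff(1) i by (simp add: of_nat_diff less_imp_diff_less)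
    next
      case 2
      then show False
        using min[of "j - i"] diff(2) j by (simp add: of_nat_diff less_imp_diff_less)
    qed
  qed
qed

context
  fixes J g
  assumes J: "brace_ideal B J" and g: "central_mod J g"
begin

lemma supersoluble_factor_infinite_cyclic:
  assumes nz: "\<And>k. k \<noteq> 0 \<Longrightarrow> multiple g k \<notin> J"
  shows "supersoluble_factor J (add_gen (insert g J))"
proof -
  let ?S = "sub_quot B (add_gen (insert g J)) J"
  have gc: "g \<in> carrier B"
    using central_mod_carrier[OF g] .
  have S: "?S = range (\<lambda>k. J +> multiple g k)"
    using sub_quot_add_gen_insert[OF J g] .
  have "inj (\<lambda>k. J +> multiple g k)"
  proof (rule injI)
    fix k l assume "J +> multiple g k = J +> multiple g l"
    then have "multiple g (k - l) \<in> J"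
      by (simp add: coset_multiple_eq_iff[OF J gc])
    then show "k = l"
      using nz[of "k - l"] by auto
  qed
  then have "infinite ?S"
    unfolding S using infinite_UNIV_int finite_imageD by blast
  moreover have "J +> g \<in> ?S"
    unfolding S using gc by (intro range_eqI[of _ _ 1]) simp
  moreover have "?S = generate (add_monoid (quot J)) {J +> g}"
    unfolding S using generate_coset_quot[OF J gc] by simp
  ultimately show ?thesis
    unfolding supersoluble_factor_def Let_def
    using sub_quot_add_gen_insert_subset_socle[OF J g] by blast
qed

lemma supersoluble_factor_prime_cyclic:
  assumes p: "Factorial_Ring.prime p" and pJ: "multiple g (int p) \<in> J"
    and min: "\<And>m. \<lbrakk>0 < m; m < p\<rbrakk> \<Longrightarrow> multiple g (int m) \<notin> J"
  shows "supersoluble_factor J (add_gen (insert g J))"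
proof -
  have gc: "g \<in> carrier B"
    using central_mod_carrier[OF g] .
  have "sub_quot B (add_gen (insert g J)) J = (\<lambda>i. J +> multiple g (int i)) ` {0..<p}"
    using sub_quot_add_gen_insert[OF J g] range_coset_multiple_torsion[OF J gc prime_gt_0_nat[OF p] pJ]
    by simp
  then have "card (sub_quot B (add_gen (insert g J)) J) = p"
    using inj_on_coset_multiple[OF J gc min] by (simp add: card_image)
  then show ?thesis
    unfolding supersoluble_factor_def Let_def using p by simp
qed

end

lemma add_gen_insert_multiple:
  assumes J: "J \<subseteq> carrier B" and g: "g \<in> carrier B"
  shows "add_gen (insert g (add_gen (insert (multiple g k) J))) = add_gen (insert g J)"
proof (rule add_gen_eqI)
  let ?K = "add_gen (insert (multiple g k) J)"
  have gJ: "insert g J \<subseteq> carrier B"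
    using J g by blast
  have sub: "subgroup (add_gen (insert g J)) (add_monoid B)"
    using add.generate_is_subgroup[OF gJ] .
  have "multiple g k \<in> add_gen (insert g J)"
    using add.subgroup_int_pow_closed[OF sub] add_gen_incl[of "insert g J"] by blast
  then have "insert (multiple g k) J \<subseteq> add_gen (insert g J)"
    using add_gen_incl[of "insert g J"] by blast
  then have "?K \<subseteq> add_gen (insert g J)"
    by (rule add.generate_subgroup_incl[OF _ sub])
  then show "insert g ?K \<subseteq> add_gen (insert g J)"
    using add_gen_incl[of "insert g J"] by blast
  have "insert (multiple g k) J \<subseteq> carrier B"
    using J g by simp
  then have "?K \<subseteq> carrier B"
    by (rule add_subgroup_subset[OF add.generate_is_subgroup])
  then show "insert g ?K \<subseteq> carrier B"
    using g by blast
  show "insert g J \<subseteq> add_gen (insert g ?K)"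
    using add_gen_incl[of "insert g ?K"] add_gen_incl[of "insert (multiple g k) J"] by blast
qed (use J g in blast)

text \<open>Induction on a positive \<open>m\<close> with \<open>m g \<in> J\<close>: for composite \<open>m = p r\<close> pass through the ideal
  generated by \<open>J\<close> and \<open>p g\<close>, whose index steps need the smaller multiples \<open>r\<close> and \<open>p\<close>.\<close>

lemma supersoluble_series_torsion_cyclic:
  assumes "brace_ideal B J" "central_mod J g" "0 < m" "multiple g (int m) \<in> J"
  shows "supersoluble_series J (add_gen (insert g J))"
  using assms
proof (induction m arbitrary: J g rule: less_induct)
  case (less m J g)
  note J = less.prems(1) and g = less.prems(2) and m = less.prems(3,4) and IH = less.IH
  have gc: "g \<in> carrier B"
    using central_mod_carrier[OF g] .
  consider (smaller) m' where "0 < m'" "m' < m" "multiple g (int m') \<in> J"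
    | (one) "m = 1"
    | (prime) "Factorial_Ring.prime m" "\<And>m'. \<lbrakk>0 < m'; m' < m\<rbrakk> \<Longrightarrow> multiple g (int m') \<notin> J"
    | (composite) p r where "m = p * r" "0 < p" "p < m" "0 < r" "r < m"
    using nat_composite_factors[OF m(1)] by blast
  then show ?case
  proof cases
    case smaller
    then show ?thesis
      using IH J g by blast
  next
    case one
    then have "insert g J = J"
      using m(2) gc by auto
    then show ?thesis
      using add_gen_subgroup_eq[OF ideal_add_subgroup[OF J]] supersoluble_series.refl[OF J] by simp
  next
    case prime
    then show ?thesis
      using supersoluble_series_single[OF J ideal_add_gen_insert[OF J g]] add_gen_incl
        supersoluble_factor_prime_cyclic[OF J g prime(1) m(2)] by blast
  next
    case (composite p r)
    let ?K = "add_gen (insert (multiple g (int p)) J)"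
    have gp: "central_mod J (multiple g (int p))"
      using central_mod_multiple[OF J g] .
    have "multiple (multiple g (int p)) (int r) \<in> J"
      using m(2) gc composite(1) by (simp add: add.int_pow_pow)
    then have JK: "supersoluble_series J ?K"
      by (rule IH[OF composite(5) J gp composite(4)])
    have "J \<subseteq> ?K" "multiple g (int p) \<in> ?K"
      using add_gen_incl by blast+
    then have "supersoluble_series ?K (add_gen (insert g ?K))"
      using IH[OF composite(3) ideal_add_gen_insert[OF J gp] central_mod_mono[OF _ g] composite(2)]
      by blast
    then show ?thesis
      using supersoluble_series_trans[OF JK] add_gen_insert_multiple[OF ideal_subset[OF J] gc] by simp
  qed
qed

lemma supersoluble_series_cyclic:
  assumes J: "brace_ideal B J" and g: "central_mod J g"
  shows "supersoluble_series J (add_gen (insert g J))"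
proof (cases "\<exists>k. k \<noteq> 0 \<and> multiple g k \<in> J")
  case True
  then obtain k where k: "k \<noteq> 0" "multiple g k \<in> J"
    by blast
  have "multiple g \<bar>k\<bar> \<in> J"
  proof (cases "k < 0")
    case True
    then have "multiple g \<bar>k\<bar> = \<ominus> multiple g k"
      using add.int_pow_neg[OF central_mod_carrier[OF g], of k] by simp
    then show ?thesis
      using ideal_neg_closed[OF J k(2)] by simp
  qed (use k in simp)
  then show ?thesis
    using supersoluble_series_torsion_cyclic[OF J g, of "nat \<bar>k\<bar>"] k(1) by simp
next
  case False
  then have "supersoluble_factor J (add_gen (insert g J))"
    using supersoluble_factor_infinite_cyclic[OF J g] by blast
  then show ?thesis
    using supersoluble_series_single[OF J ideal_add_gen_insert[OF J g]] add_gen_incl by blast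
qed

lemma supersoluble_series_add_gen:
  assumes J: "brace_ideal B J" and "finite F" and "\<And>a. a \<in> F \<Longrightarrow> central_mod J a"
  shows "supersoluble_series J (add_gen (F \<union> J))"
  using assms(2,3)
proof (induction F rule: finite_induct)
  case empty
  then show ?case
    using add_gen_subgroup_eq[OF ideal_add_subgroup[OF J]] supersoluble_series.refl[OF J] by simp
next
  case (insert x F)
  let ?K = "add_gen (F \<union> J)"
  have F: "\<And>a. a \<in> F \<Longrightarrow> central_mod J a" and x: "central_mod J x"
    using insert.prems by simp_all
  have K: "brace_ideal B ?K"
    using ideal_add_gen_central_mod[OF J F] .
  have JK: "J \<subseteq> ?K"
    using add_gen_incl[of "F \<union> J"] by blast
  have "supersoluble_series ?K (add_gen (insert x ?K))"
    using supersoluble_series_cyclic[OF K central_mod_mono[OF JK x]] .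
  moreover have "add_gen (insert x ?K) = add_gen (insert x F \<union> J)"
  proof -
    have c: "insert x F \<union> J \<subseteq> carrier B"
      using central_mod_carrier[OF x] central_mod_carrier[OF F] ideal_subset[OF J] by blast
    have "F \<union> J \<subseteq> add_gen (insert x F \<union> J)"
      using add_gen_incl[of "insert x F \<union> J"] by blast
    then have "?K \<subseteq> add_gen (insert x F \<union> J)"
      by (rule add.generate_subgroup_incl[OF _ add.generate_is_subgroup[OF c]])
    then have "insert x ?K \<subseteq> add_gen (insert x F \<union> J)"
      using add_gen_incl[of "insert x F \<union> J"] by blast
    moreover have "insert x F \<union> J \<subseteq> add_gen (insert x ?K)"
      using add_gen_incl[of "insert x ?K"] add_gen_incl[of "F \<union> J"] by blast
    moreover have "insert x ?K \<subseteq> carrier B"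
      using central_mod_carrier[OF x] ideal_subset[OF K] by blast
    ultimately show ?thesis
      using add_gen_eqI[OF _ c] by simp
  qed
  ultimately show ?case
    using supersoluble_series_trans[OF insert.IH[OF F]] by simp
qed

lemma supersoluble_series_lower_central_Suc:
  assumes "finitely_generated_brace B"
  shows "supersoluble_series (lower_central (Suc n)) (lower_central n)"
proof -
  obtain F where F: "finite F" "F \<subseteq> lower_central n"
    "lower_central n \<subseteq> add_gen (F \<union> lower_central (Suc n))"
    using add_fin_gen_mod_lower_central[OF assms] unfolding add_fin_gen_mod_def by blast
  have "F \<union> lower_central (Suc n) \<subseteq> lower_central n"
    using F(2) lower_central_Suc_subset by blast
  then have "add_gen (F \<union> lower_central (Suc n)) \<subseteq> lower_central n"
    by (rule add.generate_subgroup_incl[OF _ ideal_add_subgroup[OF ideal_lower_central]])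
  then have "add_gen (F \<union> lower_central (Suc n)) = lower_central n"
    using F(3) by blast
  moreover have "central_mod (lower_central (Suc n)) a" if "a \<in> F" for a
    using F(2) that central_mod_lower_central by blast
  ultimately show ?thesis
    using supersoluble_series_add_gen[OF ideal_lower_central[of "Suc n"] F(1)] by metis
qed

lemma supersoluble_series_lower_central:
  assumes "finitely_generated_brace B"
  shows "supersoluble_series (lower_central k) (carrier B)"
proof (induction k)
  case 0
  show ?case
    using supersoluble_series.refl[OF ideal_lower_central[of 0]] by simp
next
  case (Suc k)
  then show ?case
    using supersoluble_series_trans[OF supersoluble_series_lower_central_Suc[OF assms]] by blast
qed

end

theorem theorem3p6:
  fixes B :: "'a ring"
  assumes "brace B"
    and "finitely_generated_brace B"
    and "centrally_nilpotent B"
  shows "supersoluble B"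
proof -
  interpret skew_brace B
    by (rule skew_brace.intro) (rule assms(1))
  obtain c where "lower_central c = {\<zero>\<^bsub>B\<^esub>}"
    using lower_central_eventually_zero[OF assms(3)] .
  then have "supersoluble_series {\<zero>\<^bsub>B\<^esub>} (carrier B)"
    using supersoluble_series_lower_central[OF assms(2), of c] by simp
  then show ?thesis
    by (rule supersoluble_if_series)
qed

end
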